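(* Consider the time-invariant noiseless affine system $x(t+1)=Ax(t)+Bu(t)+s$ with $(A,B)$ controllable, and a collected trajectory $\tilde x(0:L-1)$, $\tilde u(0:L-1)$ of this system with $\tilde u$ persistently exciting of order $n+(T+1)+1$. Consider the problem $$\min_{\mathbf{x},\mathbf{u},G,\hat g} J(\mathbf{x},\mathbf{u})\quad\text{s.t.}\quad \begin{bmatrix}\mathbf{x}\\ \mathbf{u}\end{bmatrix}=\begin{bmatrix} H_{T+1}(\tilde x)\\ H_{T+1}(\tilde u)\end{bmatrix}\begin{bmatrix} G-\hat g\mathbf{1}_n^\top & \hat g\end{bmatrix}\begin{bmatrix} x_0\\ 1\end{bmatrix},\ \ G\in\Gamma(\tilde x),\ \hat g\in\Lambda(\tilde x),$$ $$\mathcal{H}_x\mathbf{x}+\mathcal{H}_u\mathbf{u}\le\mathbf{h},\quad x_0=x(0),\quad x_T\in\mathcal{X}_T.\qquad (\mathrm{P}_3)$$ Then a sequence $(x^*_{0:T},u^*_{0:T})$ is an optimal solution (in its $(\mathbf{x},\mathbf{u})$ components) of $(\mathrm{P}_3)$ if and only if it is an optimal solution of the MPC problem $$\min_{u_{0:T},x_{0:T}} J(u_{0:T},x_{0:T})\ \text{s.t.}\ x_{t+1}=Ax_t+Bu_t+s,\ H_xx_t+H_uu_t\le h\ (t\in[0,T]),\ x_0=x(0),\ x_T\in\mathcal{X}_T.$$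
   Context: Cost $J(u_{0:T},x_{0:T})=\|Px_T\|_p+\sum_{t=0}^{T-1}(\|Qx_t\|_p+\|Ru_t\|_p)$, $p\in\{1,2,\infty\}$; for $p=2$, $Q=Q^\top\succeq0$, $R=R^\top\succ0$, $P=P^\top\succeq0$; for $p\in\{1,\infty\}$, $Q,P,R$ full rank. $H_x\in\mathbb{R}^{d\times n}$, $H_u\in\mathbb{R}^{d\times m}$, $h\in\mathbb{R}^d$; $\mathcal{X}_T$ polyhedral; $\mathcal{H}_x=\mathrm{diag}(H_x,\dots,H_x)$, $\mathcal{H}_u=\mathrm{diag}(H_u,\dots,H_u)$ ($T+1$ copies), $\mathbf{h}=[h^\top,\dots,h^\top]^\top$; $\mathbf{x}=[x_0^\top,\dots,x_T^\top]^\top$, $\mathbf{u}=[u_0^\top,\dots,u_T^\top]^\top$. For a signal $\sigma(0:N-1)$ with values in $\mathbb{R}^p$, the Hankel matrix of depth $k$ is the $pk\times(N-k+1)$ matrix whose $(i,j)$ block is $\sigma(i+j)$; $\sigma$ is persistently exciting of order $k$ if $H_k(\sigma)$ has full (row) rank. $H_1(\tilde x)$ is the first $n$ rows of $H_{T+1}(\tilde x)$. $\Gamma(\tilde x)=\{G\in\mathbb{R}^{(L-T)\times n}: H_1(\tilde x)G=I_n,\ \mathbf{1}_{L-T}^\top G=\mathbf{1}_n^\top\}$, $\Lambda(\tilde x)=\{\hat g\in\mathbb{R}^{L-T}: H_1(\tilde x)\hat g=\mathbf{0}_n,\ \mathbf{1}_{L-T}^\top\hat g=1\}$. *)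

theory Defs
  imports Complex_Main "Jordan_Normal_Form.DL_Rank"
begin

definition ones_vec :: "nat \<Rightarrow> real vec" where
  "ones_vec k = vec k (\<lambda>_. 1)"

definition full_row_rank :: "real mat \<Rightarrow> bool" where
  "full_row_rank M \<longleftrightarrow> vec_space.rank (dim_row M) M = dim_row M"

definition hankel :: "nat \<Rightarrow> nat \<Rightarrow> nat \<Rightarrow> (nat \<Rightarrow> real vec) \<Rightarrow> real mat" where
  "hankel p k N sig = mat (p * k) (N - k + 1) (\<lambda>(i, j). sig (i div p + j) $ (i mod p))"

definition persistently_exciting :: "nat \<Rightarrow> nat \<Rightarrow> nat \<Rightarrow> (nat \<Rightarrow> real vec) \<Rightarrow> bool" where
  "persistently_exciting p k N sig \<longleftrightarrow> full_row_rank (hankel p k N sig)"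

definition ctrb_matrix :: "nat \<Rightarrow> nat \<Rightarrow> real mat \<Rightarrow> real mat \<Rightarrow> real mat" where
  "ctrb_matrix n m A B = mat n (n * m) (\<lambda>(i, j). ((A ^\<^sub>m (j div m)) * B) $$ (i, j mod m))"

definition controllable :: "nat \<Rightarrow> nat \<Rightarrow> real mat \<Rightarrow> real mat \<Rightarrow> bool" where
  "controllable n m A B \<longleftrightarrow> vec_space.rank n (ctrb_matrix n m A B) = n"

definition stack :: "nat \<Rightarrow> nat \<Rightarrow> (nat \<Rightarrow> real vec) \<Rightarrow> real vec" where
  "stack q T z = vec (q * (T + 1)) (\<lambda>i. z (i div q) $ (i mod q))"

definition blockdiag :: "nat \<Rightarrow> real mat \<Rightarrow> real mat" where
  "blockdiag T H = mat (dim_row H * (T + 1)) (dim_col H * (T + 1))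
     (\<lambda>(i, j). if i div dim_row H = j div dim_col H
               then H $$ (i mod dim_row H, j mod dim_col H) else 0)"

definition vec_le :: "real vec \<Rightarrow> real vec \<Rightarrow> bool" where
  "vec_le v w \<longleftrightarrow> dim_vec v = dim_vec w \<and> (\<forall>i < dim_vec v. v $ i \<le> w $ i)"

datatype pkind = P1 | P2 | PInf

fun pnorm :: "pkind \<Rightarrow> real vec \<Rightarrow> real" where
  "pnorm P1 v = (\<Sum>i<dim_vec v. \<bar>v $ i\<bar>)"
| "pnorm P2 v = sqrt (\<Sum>i<dim_vec v. (v $ i)^2)"
| "pnorm PInf v = (if dim_vec v = 0 then 0 else Max ((\<lambda>i. \<bar>v $ i\<bar>) ` {..<dim_vec v}))"

definition cost :: "pkind \<Rightarrow> real mat \<Rightarrow> real mat \<Rightarrow> real mat \<Rightarrow> nat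
    \<Rightarrow> (nat \<Rightarrow> real vec) \<Rightarrow> (nat \<Rightarrow> real vec) \<Rightarrow> real" where
  "cost p P Q R T x u =
     pnorm p (P *\<^sub>v x T) + (\<Sum>t<T. pnorm p (Q *\<^sub>v x t) + pnorm p (R *\<^sub>v u t))"

definition sym_psd :: "nat \<Rightarrow> real mat \<Rightarrow> bool" where
  "sym_psd n M \<longleftrightarrow> M \<in> carrier_mat n n \<and> M\<^sup>T = M \<and> (\<forall>v \<in> carrier_vec n. v \<bullet> (M *\<^sub>v v) \<ge> 0)"

definition sym_pd :: "nat \<Rightarrow> real mat \<Rightarrow> bool" where
  "sym_pd n M \<longleftrightarrow> M \<in> carrier_mat n n \<and> M\<^sup>T = M \<and>
     (\<forall>v \<in> carrier_vec n. v \<noteq> 0\<^sub>v n \<longrightarrow> v \<bullet> (M *\<^sub>v v) > 0)"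

definition full_rank_sq :: "nat \<Rightarrow> real mat \<Rightarrow> bool" where
  "full_rank_sq n M \<longleftrightarrow> M \<in> carrier_mat n n \<and> vec_space.rank n M = n"

definition cost_ok :: "pkind \<Rightarrow> nat \<Rightarrow> nat \<Rightarrow> real mat \<Rightarrow> real mat \<Rightarrow> real mat \<Rightarrow> bool" where
  "cost_ok p n m P Q R \<longleftrightarrow>
     (if p = P2 then sym_psd n Q \<and> sym_pd m R \<and> sym_psd n P
      else full_rank_sq n Q \<and> full_rank_sq m R \<and> full_rank_sq n P)"

definition Gamma_set :: "nat \<Rightarrow> nat \<Rightarrow> nat \<Rightarrow> (nat \<Rightarrow> real vec) \<Rightarrow> real mat set" where
  "Gamma_set n T L xd = {G \<in> carrier_mat (L - T) n.
      mat_of_rows (L - T) (map (row (hankel n (T + 1) L xd)) [0..<n]) * G = 1\<^sub>m n \<and>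
      G\<^sup>T *\<^sub>v ones_vec (L - T) = ones_vec n}"

definition Lambda_set :: "nat \<Rightarrow> nat \<Rightarrow> nat \<Rightarrow> (nat \<Rightarrow> real vec) \<Rightarrow> real vec set" where
  "Lambda_set n T L xd = {g \<in> carrier_vec (L - T).
      mat_of_rows (L - T) (map (row (hankel n (T + 1) L xd)) [0..<n]) *\<^sub>v g = 0\<^sub>v n \<and>
      (ones_vec (L - T)) \<bullet> g = 1}"

definition GG_mat :: "nat \<Rightarrow> real mat \<Rightarrow> real vec \<Rightarrow> real mat" where
  "GG_mat n G g = mat (dim_row G) (n + 1) (\<lambda>(i, j). if j < n then G $$ (i, j) - g $ i else g $ i)"

definition feasible_P3 ::
  "nat \<Rightarrow> nat \<Rightarrow> nat \<Rightarrow> nat \<Rightarrow> (nat \<Rightarrow> real vec) \<Rightarrow> (nat \<Rightarrow> real vec)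
   \<Rightarrow> real mat \<Rightarrow> real mat \<Rightarrow> real vec \<Rightarrow> real vec \<Rightarrow> real vec set
   \<Rightarrow> (nat \<Rightarrow> real vec) \<Rightarrow> (nat \<Rightarrow> real vec) \<Rightarrow> bool" where
  "feasible_P3 n m T L xd ud Hx Hu h xinit XT x u \<longleftrightarrow>
     (\<forall>t\<le>T. x t \<in> carrier_vec n \<and> u t \<in> carrier_vec m) \<and>
     (\<exists>G g. G \<in> Gamma_set n T L xd \<and> g \<in> Lambda_set n T L xd \<and>
        stack n T x = hankel n (T + 1) L xd *\<^sub>v (GG_mat n G g *\<^sub>v (x 0 @\<^sub>v ones_vec 1)) \<and>
        stack m T u = hankel m (T + 1) L ud *\<^sub>v (GG_mat n G g *\<^sub>v (x 0 @\<^sub>v ones_vec 1))) \<and>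
     vec_le (blockdiag T Hx *\<^sub>v stack n T x + blockdiag T Hu *\<^sub>v stack m T u)
            (vec (dim_vec h * (T + 1)) (\<lambda>i. h $ (i mod dim_vec h))) \<and>
     x 0 = xinit \<and> x T \<in> XT"

definition feasible_MPC ::
  "nat \<Rightarrow> nat \<Rightarrow> nat \<Rightarrow> real mat \<Rightarrow> real mat \<Rightarrow> real vec
   \<Rightarrow> real mat \<Rightarrow> real mat \<Rightarrow> real vec \<Rightarrow> real vec \<Rightarrow> real vec set
   \<Rightarrow> (nat \<Rightarrow> real vec) \<Rightarrow> (nat \<Rightarrow> real vec) \<Rightarrow> bool" where
  "feasible_MPC n m T A B s Hx Hu h xinit XT x u \<longleftrightarrow>
     (\<forall>t\<le>T. x t \<in> carrier_vec n \<and> u t \<in> carrier_vec m) \<and>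
     (\<forall>t<T. x (Suc t) = A *\<^sub>v x t + B *\<^sub>v u t + s) \<and>
     (\<forall>t\<le>T. vec_le (Hx *\<^sub>v x t + Hu *\<^sub>v u t) h) \<and>
     x 0 = xinit \<and> x T \<in> XT"

definition is_optimal ::
  "((nat \<Rightarrow> real vec) \<Rightarrow> (nat \<Rightarrow> real vec) \<Rightarrow> bool)
   \<Rightarrow> ((nat \<Rightarrow> real vec) \<Rightarrow> (nat \<Rightarrow> real vec) \<Rightarrow> real)
   \<Rightarrow> (nat \<Rightarrow> real vec) \<Rightarrow> (nat \<Rightarrow> real vec) \<Rightarrow> bool" where
  "is_optimal F J x u \<longleftrightarrow> F x u \<and> (\<forall>x' u'. F x' u' \<longrightarrow> J x u \<le> J x' u')"

end

theory Submission
  imports Defs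
begin

text \<open>Both problems minimise the same cost, so it suffices that their feasible sets coincide.
  The trajectory defined by \<open>G\<close> and \<open>\<^bold>g\<close> is \<open>H\<^sub>T\<^sub>+\<^sub>1 \<alpha>\<close> with \<open>1\<^sup>T \<alpha> = 1\<close>, an affine
  combination of shifted data trajectories, so it obeys the affine dynamics. Conversely, by the
  fundamental lemma for affine systems every trajectory has this form: persistency of excitation
  of order \<open>n + T + 2\<close> and controllability make the rows of \<open>[1\<^sup>T; H\<^sub>1(x); H\<^sub>T\<^sub>+\<^sub>1(u)]\<close> independent,
  which is shown by eliminating the state from a left-kernel relation with an annihilating
  polynomial of \<open>A\<close>. Finally, any such \<open>\<alpha>\<close> is realised as \<open>[G - \<^bold>g 1\<^sup>T, \<^bold>g] [x0; 1]\<close> by a rank-one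
  correction of arbitrary elements of \<open>\<Gamma>\<close> and \<open>\<Lambda>\<close>.\<close>

section \<open>Linear algebra and finite sums\<close>

lemma scalar_prod_self_eq_0_iff:
  fixes z :: "real vec"
  assumes "z \<in> carrier_vec r"
  shows "z \<bullet> z = 0 \<longleftrightarrow> z = 0\<^sub>v r"
  using conjugate_square_eq_0_vec[OF assms] by (simp add: scalar_prod_def conjugate_vec_def)

lemma full_row_rank_left_kernel:
  fixes M :: "real mat"
  assumes M: "M \<in> carrier_mat r c" and rk: "vec_space.rank r M = r"
    and z: "z \<in> carrier_vec r" and orth: "\<forall>j<c. col M j \<bullet> z = 0"
  shows "z = 0\<^sub>v r"
proof -
  interpret vec_space "TYPE(real)" r .
  obtain S where max: "maximal S (\<lambda>T. T \<subseteq> set (cols M) \<and> lin_indpt T)"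
    using maximal_exists[of "(\<lambda>T. T \<subseteq> set (cols M) \<and> lin_indpt T)" "card (set (cols M))" "{}"]
    by (meson List.finite_set card_mono empty_iff empty_subsetI finite_lin_indpt2 rev_finite_subset)
  have Ssub: "S \<subseteq> set (cols M)" and li: "lin_indpt S" using max unfolding maximal_def by auto
  have fin: "finite S" using Ssub finite_subset by blast
  have SC: "S \<subseteq> carrier_vec r" using Ssub M cols_dim by blast
  have "basis S"
    by (rule dim_li_is_basis[OF fin_dim fin SC li]) (use rank_card_indpt[OF M max] rk dim_is_n in auto)
  then have "z \<in> span S" using z unfolding basis_def by auto
  then obtain a where a: "lincomb a S = z"
    using finite_in_span[OF fin SC] by blast
  have "z \<bullet> z = lincomb a S \<bullet> z" using a by simp
  also have "\<dots> = (\<Sum>v\<in>S. (a v \<cdot>\<^sub>v v) \<bullet> z)"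
    unfolding lincomb_def by (rule finsum_scalar_prod_sum) (use SC z in auto)
  also have "\<dots> = 0"
  proof (rule sum.neutral, rule ballI)
    fix v assume v: "v \<in> S"
    then obtain j where "j < c" "v = col M j"
      using Ssub M by (auto simp: cols_def in_set_conv_nth)
    then show "(a v \<cdot>\<^sub>v v) \<bullet> z = 0" using orth z v SC by auto
  qed
  finally show ?thesis using scalar_prod_self_eq_0_iff z by blast
qed

text \<open>If the left kernel of \<open>M\<close> is trivial, then \<open>M M\<^sup>T\<close> is invertible and
  \<open>y = M\<^sup>T (M M\<^sup>T)\<^sup>-\<^sup>1 b\<close> solves \<open>M y = b\<close>.\<close>

lemma mult_mat_vec_surj_if_left_kernel_trivial:
  fixes M :: "real mat"
  assumes M: "M \<in> carrier_mat r c"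
    and lk: "\<forall>z\<in>carrier_vec r. M\<^sup>T *\<^sub>v z = 0\<^sub>v c \<longrightarrow> z = 0\<^sub>v r"
    and b: "b \<in> carrier_vec r"
  shows "\<exists>y \<in> carrier_vec c. M *\<^sub>v y = b"
proof -
  let ?K = "M * M\<^sup>T"
  have MT: "M\<^sup>T \<in> carrier_mat c r" and K: "?K \<in> carrier_mat r r" using M by auto
  have "det ?K \<noteq> 0"
  proof
    assume "det ?K = 0"
    then obtain v where v: "v \<in> carrier_vec r" "v \<noteq> 0\<^sub>v r" "?K *\<^sub>v v = 0\<^sub>v r"
      using det_0_iff_vec_prod_zero[OF K] by blast
    have w: "M\<^sup>T *\<^sub>v v \<in> carrier_vec c" using MT v by simp
    have "(M\<^sup>T *\<^sub>v v) \<bullet> (M\<^sup>T *\<^sub>v v) = v \<bullet> (?K *\<^sub>v v)"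
      using transpose_vec_mult_scalar[OF M w v(1)] M MT v by simp
    then have "M\<^sup>T *\<^sub>v v = 0\<^sub>v c" using scalar_prod_self_eq_0_iff[OF w] v by simp
    then show False using lk v by auto
  qed
  from det_non_zero_imp_unit[OF K this, of "()"]
  obtain Ki where Ki: "Ki \<in> carrier_mat r r" "?K * Ki = 1\<^sub>m r"
    unfolding Units_def ring_mat_def by auto
  have Kib: "Ki *\<^sub>v b \<in> carrier_vec r" using Ki b by simp
  have "M *\<^sub>v (M\<^sup>T *\<^sub>v (Ki *\<^sub>v b)) = (?K * Ki) *\<^sub>v b"
    using assoc_mult_mat_vec[OF M MT Kib] assoc_mult_mat_vec[OF K Ki(1) b] by simp
  then show ?thesis using Ki MT b by (intro bexI[of _ "M\<^sup>T *\<^sub>v (Ki *\<^sub>v b)"]) auto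
qed

lemma exists_linear_dependence:
  fixes \<kappa> :: "nat \<Rightarrow> real vec"
  assumes "\<forall>t\<le>n. \<kappa> t \<in> carrier_vec n"
  shows "\<exists>c. (\<exists>t\<le>n. c t \<noteq> 0) \<and> (\<forall>i<n. (\<Sum>t\<le>n. c t * \<kappa> t $ i) = 0)"
proof -
  define M where "M = mat (Suc n) (Suc n) (\<lambda>(i,t). if i < n then \<kappa> t $ i else (0::real))"
  have M: "M \<in> carrier_mat (Suc n) (Suc n)" unfolding M_def by simp
  have MT: "M\<^sup>T \<in> carrier_mat (Suc n) (Suc n)" using M by simp
  have "M\<^sup>T *\<^sub>v unit_vec (Suc n) n = 0\<^sub>v (Suc n)"
  proof (rule eq_vecI)
    fix t assume "t < dim_vec (0\<^sub>v (Suc n) :: real vec)"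
    then show "(M\<^sup>T *\<^sub>v unit_vec (Suc n) n) $ t = 0\<^sub>v (Suc n) $ t"
      using M by (simp add: M_def)
  qed (use M in simp)
  then have "det M\<^sup>T = 0"
    using det_0_iff_vec_prod_zero[OF MT] unit_vec_nonzero[of n "Suc n"]
    by (metis lessI unit_vec_carrier)
  then have "det M = 0" using det_transpose[OF M] by simp
  then obtain v where v: "v \<in> carrier_vec (Suc n)" "v \<noteq> 0\<^sub>v (Suc n)" "M *\<^sub>v v = 0\<^sub>v (Suc n)"
    using det_0_iff_vec_prod_zero[OF M] by blast
  have "\<exists>t\<le>n. v $ t \<noteq> 0"
  proof (rule ccontr)
    assume "\<not> ?thesis"
    then have "v = 0\<^sub>v (Suc n)" using v(1) by (intro eq_vecI) auto
    then show False using v(2) by simp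
  qed
  moreover have "(\<Sum>t\<le>n. v $ t * \<kappa> t $ i) = 0" if i: "i < n" for i
  proof -
    have "(\<Sum>t\<le>n. v $ t * \<kappa> t $ i) = row M i \<bullet> v"
      unfolding scalar_prod_def lessThan_Suc_atMost[symmetric] atLeast0LessThan[symmetric]
      using v(1) i by (intro sum.cong) (auto simp: M_def)
    also have "\<dots> = 0" using arg_cong[OF v(3), of "\<lambda>w. w $ i"] M i by simp
    finally show ?thesis .
  qed
  ultimately show ?thesis by (intro exI[of _ "\<lambda>t. v $ t"]) auto
qed

lemma pow_mat_add:
  assumes "A \<in> carrier_mat n n"
  shows "A ^\<^sub>m a * A ^\<^sub>m b = A ^\<^sub>m (a + b)"
proof (induction b)
  case (Suc b)
  have "A ^\<^sub>m a * A ^\<^sub>m Suc b = (A ^\<^sub>m a * A ^\<^sub>m b) * A"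
    using assms by (simp add: assoc_mult_mat[of _ n n _ n _ n])
  then show ?case using Suc by simp
qed (use assms in simp)

lemma mult_add_less_mult:
  assumes "i < k" and "l < (m::nat)"
  shows "i * m + l < k * m"
proof -
  have "i * m + l < Suc i * m" using assms(2) by simp
  also have "\<dots> \<le> k * m" using assms(1) by (intro mult_le_mono1) simp
  finally show ?thesis .
qed

lemma all_less_mult_iff:
  fixes d N :: nat
  shows "(\<forall>i<d * N. P (i div d) (i mod d)) \<longleftrightarrow> (\<forall>t<N. \<forall>r<d. P t r)"
proof
  assume H: "\<forall>i<d * N. P (i div d) (i mod d)"
  show "\<forall>t<N. \<forall>r<d. P t r"
  proof (intro allI impI)
    fix t r assume "t < N" "r < d"
    then show "P t r" using H[rule_format, of "t * d + r"] mult_add_less_mult[of t N r d]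
      by (simp add: mult.commute)
  qed
next
  assume H: "\<forall>t<N. \<forall>r<d. P t r"
  show "\<forall>i<d * N. P (i div d) (i mod d)"
  proof (intro allI impI)
    fix i assume i: "i < d * N"
    then have "d > 0" by (cases d) auto
    then show "P (i div d) (i mod d)"
      using H i less_mult_imp_div_less[of i N d] by (simp add: mult.commute)
  qed
qed

lemma sum_lessThan_add_split: "(\<Sum>r<(a::nat)+b. f r) = (\<Sum>r<a. f r) + (\<Sum>l<b. f (a+l))"
  by (induction b) (auto simp: ac_simps)

lemma sum_lessThan_mult_split: "(\<Sum>r<(P::nat)*m. f r) = (\<Sum>q<P. \<Sum>l<m. f (q*m+l))"
  by (induction P) (simp_all add: add.commute[of m] sum_lessThan_add_split)

lemma sum_lessThan_restrict:
  assumes "t \<le> (K::nat)"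
  shows "(\<Sum>q<K. if q < t then f q else 0) = (\<Sum>r<t. f r)"
proof -
  have "(\<Sum>q<K. if q < t then f q else 0) = (\<Sum>q\<in>{..<K} \<inter> {q. q < t}. f q)"
    by (subst sum.inter_restrict) simp_all
  also have "{..<K} \<inter> {q. q < t} = {..<t}" using assms by auto
  finally show ?thesis .
qed

lemma sum_lessThan_shift_restrict:
  assumes "t + k \<le> (K::nat)"
  shows "(\<Sum>q<K. if t \<le> q \<and> q - t < k then f (q - t) else 0) = (\<Sum>i<k. f i)"
proof -
  have "{..<K} \<inter> {q. t \<le> q \<and> q - t < k} = (\<lambda>i. t + i) ` {..<k}"
  proof -
    have "q \<in> (\<lambda>i. t + i) ` {..<k}" if "t \<le> q" "q - t < k" for q
      using that by (intro image_eqI[of _ _ "q - t"]) auto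
    then show ?thesis using assms by auto
  qed
  moreover have "(\<Sum>q<K. if t \<le> q \<and> q - t < k then f (q - t) else 0)
      = (\<Sum>q\<in>{..<K} \<inter> {q. t \<le> q \<and> q - t < k}. f (q - t))"
    by (subst sum.inter_restrict) simp_all
  ultimately have "(\<Sum>q<K. if t \<le> q \<and> q - t < k then f (q - t) else 0)
      = (\<Sum>q\<in>(\<lambda>i. t + i) ` {..<k}. f (q - t))"
    by simp
  also have "\<dots> = (\<Sum>i<k. f i)"
    by (subst sum.reindex) (auto simp: inj_on_def)
  finally show ?thesis .
qed

lemma sum_lessThan_block_split:
  fixes n k m :: nat
  shows "(\<Sum>r<1 + n + k * m. f r) = f 0 + (\<Sum>c<n. f (1 + c)) + (\<Sum>i<k. \<Sum>l<m. f (1 + n + (i * m + l)))"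
  using sum_lessThan_add_split[where a = "1 + n" and b = "k * m" and f = f]
    sum_lessThan_add_split[where a = 1 and b = n and f = f]
    sum_lessThan_mult_split[where P = k and m = m and f = "\<lambda>r. f (1 + n + r)"] by simp

lemma less_block_index_cases:
  fixes r n k m :: nat
  assumes "r < 1 + n + k * m"
  obtains "r = 0" | c where "c < n" "r = 1 + c" | i l where "i < k" "l < m" "r = 1 + n + (i * m + l)"
proof -
  consider "r = 0" | "0 < r" "r \<le> n" | "n < r" by linarith
  then show ?thesis
  proof cases
    case 2
    then show ?thesis by (intro that(2)[of "r - 1"]) auto
  next
    case 3
    then have m: "m > 0" using assms by (cases m) auto
    have "r - 1 - n < k * m" using assms 3 by arith
    then have "(r - 1 - n) div m < k" by (simp add: less_mult_imp_div_less)
    moreover have "(r - 1 - n) mod m < m" using m by simp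
    moreover have "r = 1 + n + ((r - 1 - n) div m * m + (r - 1 - n) mod m)" using 3 by simp
    ultimately show ?thesis by (rule that(3))
  qed (rule that(1))
qed

lemma mult_if_sum_distrib:
  "(a::real) * (if P then (\<Sum>l<m. g l * U l) else 0) = (\<Sum>l<m. a * (if P then g l else 0) * U l)"
  by (cases P) (simp_all add: sum_distrib_left mult.assoc)

lemma sum_convolution_past_regroup:
  fixes a :: "nat \<Rightarrow> real" and \<psi> U :: "nat \<Rightarrow> nat \<Rightarrow> real"
  assumes "D \<le> K"
  shows "(\<Sum>t\<le>D. a t * (\<Sum>r<t. \<Sum>l<m. \<psi> (t - 1 - r) l * U r l))
       = (\<Sum>q<K. \<Sum>l<m. (\<Sum>t\<le>D. a t * (if q < t then \<psi> (t - 1 - q) l else 0)) * U q l)"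
proof -
  have "(\<Sum>t\<le>D. a t * (\<Sum>r<t. \<Sum>l<m. \<psi> (t - 1 - r) l * U r l))
      = (\<Sum>t\<le>D. a t * (\<Sum>q<K. if q < t then (\<Sum>l<m. \<psi> (t - 1 - q) l * U q l) else 0))"
    by (intro sum.cong refl arg_cong[where f="\<lambda>x. _ * x"] sum_lessThan_restrict[symmetric])
      (use assms in auto)
  also have "\<dots> = (\<Sum>t\<le>D. \<Sum>q<K. \<Sum>l<m. a t * (if q < t then \<psi> (t - 1 - q) l else 0) * U q l)"
    by (rule sum.cong[OF refl], subst sum_distrib_left, rule sum.cong[OF refl], rule mult_if_sum_distrib)
  also have "\<dots> = (\<Sum>q<K. \<Sum>l<m. \<Sum>t\<le>D. a t * (if q < t then \<psi> (t - 1 - q) l else 0) * U q l)"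
    by (subst sum.swap, rule sum.cong[OF refl], rule sum.swap)
  also have "\<dots> = (\<Sum>q<K. \<Sum>l<m. (\<Sum>t\<le>D. a t * (if q < t then \<psi> (t - 1 - q) l else 0)) * U q l)"
    by (simp add: sum_distrib_right)
  finally show ?thesis .
qed

lemma sum_convolution_future_regroup:
  fixes a :: "nat \<Rightarrow> real" and \<eta> U :: "nat \<Rightarrow> nat \<Rightarrow> real"
  assumes "D + k \<le> K"
  shows "(\<Sum>t\<le>D. a t * (\<Sum>i<k. \<Sum>l<m. \<eta> i l * U (t + i) l))
       = (\<Sum>q<K. \<Sum>l<m. (\<Sum>t\<le>D. a t * (if t \<le> q \<and> q - t < k then \<eta> (q - t) l else 0)) * U q l)"
proof -
  have "(\<Sum>t\<le>D. a t * (\<Sum>i<k. \<Sum>l<m. \<eta> i l * U (t + i) l))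
      = (\<Sum>t\<le>D. a t * (\<Sum>q<K. if t \<le> q \<and> q - t < k then (\<Sum>l<m. \<eta> (q - t) l * U (t + (q - t)) l) else 0))"
    by (intro sum.cong refl arg_cong[where f="\<lambda>x. _ * x"] sum_lessThan_shift_restrict[symmetric])
      (use assms in auto)
  also have "\<dots> = (\<Sum>t\<le>D. a t * (\<Sum>q<K. if t \<le> q \<and> q - t < k then (\<Sum>l<m. \<eta> (q - t) l * U q l) else 0))"
    by (intro sum.cong refl arg_cong[where f="\<lambda>x. _ * x"]) auto
  also have "\<dots> = (\<Sum>t\<le>D. \<Sum>q<K. \<Sum>l<m. a t * (if t \<le> q \<and> q - t < k then \<eta> (q - t) l else 0) * U q l)"
    by (rule sum.cong[OF refl], subst sum_distrib_left, rule sum.cong[OF refl], rule mult_if_sum_distrib)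
  also have "\<dots> = (\<Sum>q<K. \<Sum>l<m. \<Sum>t\<le>D. a t * (if t \<le> q \<and> q - t < k then \<eta> (q - t) l else 0) * U q l)"
    by (subst sum.swap, rule sum.cong[OF refl], rule sum.swap)
  also have "\<dots> = (\<Sum>q<K. \<Sum>l<m. (\<Sum>t\<le>D. a t * (if t \<le> q \<and> q - t < k then \<eta> (q - t) l else 0)) * U q l)"
    by (simp add: sum_distrib_right)
  finally show ?thesis .
qed

lemma monic_recurrence_vanishes:
  fixes a \<psi> :: "nat \<Rightarrow> real"
  assumes aD: "a D = 1" and init: "\<forall>r<D. \<psi> r = 0"
    and rec: "\<forall>r. (\<Sum>t\<le>D. a t * \<psi> (t + r)) = 0"
  shows "\<psi> r = 0"
proof (induction r rule: less_induct)
  case (less r)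
  show ?case
  proof (cases "r < D")
    case False
    have "0 = (\<Sum>t\<le>D. a t * \<psi> (t + (r - D)))"
      using rec by simp
    also have "\<dots> = \<psi> r + (\<Sum>t<D. a t * \<psi> (t + (r - D)))"
      using aD False by (simp add: lessThan_Suc_atMost[symmetric])
    also have "(\<Sum>t<D. a t * \<psi> (t + (r - D))) = 0"
      using less.IH False by (intro sum.neutral) auto
    finally show ?thesis by simp
  qed (use init in simp)
qed

text \<open>The coefficients of the convolution of a monic polynomial of degree \<open>D\<close> with
  the two sequences are triangular: from the top one reads off \<open>\<eta>\<close>, from the bottom \<open>\<psi>\<close>.\<close>

lemma convolution_coeffs_vanish:
  fixes a \<psi> \<eta> :: "nat \<Rightarrow> real"
  assumes aD: "a D = 1"
    and W0: "\<forall>q<k + D. (\<Sum>t\<le>D. a t * (if q < t then \<psi> (t - 1 - q) else 0))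
                    + (\<Sum>t\<le>D. a t * (if t \<le> q \<and> q - t < k then \<eta> (q - t) else 0)) = 0"
  shows "\<forall>i<k. \<eta> i = 0" and "\<forall>r<D. \<psi> r = 0"
proof -
  have split_top: "(\<Sum>t\<le>D. a t * f t) = f D + (\<Sum>t<D. a t * f t)" for f :: "nat \<Rightarrow> real"
    using aD by (simp add: lessThan_Suc_atMost[symmetric])
  have \<eta>: "\<eta> i = 0" if "i < k" for i
    using that
  proof (induction i rule: measure_induct_rule[where f = "\<lambda>i. k - i"])
    case (less i)
    have "(\<Sum>t<D. a t * (if t \<le> D + i \<and> D + i - t < k then \<eta> (D + i - t) else 0)) = 0"
    proof (intro sum.neutral ballI)
      fix t assume "t \<in> {..<D}"
      then have "D + i - t < k \<Longrightarrow> k - (D + i - t) < k - i" by auto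
      then show "a t * (if t \<le> D + i \<and> D + i - t < k then \<eta> (D + i - t) else 0) = 0"
        using less.IH[of "D + i - t"] by auto
    qed
    moreover have "(\<Sum>t\<le>D. a t * (if D + i < t then \<psi> (t - 1 - (D + i)) else 0)) = 0"
      by (intro sum.neutral) auto
    ultimately show ?case
      using W0[rule_format, of "D + i"] less.prems split_top by auto
  qed
  then show "\<forall>i<k. \<eta> i = 0" by blast
  show "\<forall>r<D. \<psi> r = 0"
  proof (intro allI impI)
    fix r assume "r < D"
    then show "\<psi> r = 0"
    proof (induction r rule: less_induct)
      case (less r)
      define q where "q = D - 1 - r"
      have "(\<Sum>t\<le>D. a t * (if t \<le> q \<and> q - t < k then \<eta> (q - t) else 0)) = 0"
        using \<eta> by (intro sum.neutral) auto
      moreover have "(\<Sum>t<D. a t * (if q < t then \<psi> (t - 1 - q) else 0)) = 0"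
        using less unfolding q_def by (intro sum.neutral) auto
      moreover have "q < k + D" using less.prems unfolding q_def by simp
      ultimately show ?case
        using W0[rule_format, OF \<open>q < k + D\<close>] less.prems split_top unfolding q_def by auto
    qed
  qed
qed

section \<open>Persistency of excitation\<close>

lemma persistently_exciting_length:
  assumes m: "m > 0" and PE: "persistently_exciting m P L ud" and P2: "2 \<le> P"
  shows "P \<le> L"
proof (rule ccontr)
  let ?H = "hankel m P L ud"
  have H: "?H \<in> carrier_mat (m * P) (L - P + 1)" unfolding hankel_def by simp
  assume "\<not> P \<le> L"
  then have "m * P \<le> 1"
    using vec_space.rank_le_nc[OF H] PE H unfolding persistently_exciting_def full_row_rank_def by simp
  moreover have "P \<le> m * P" using m by simp
  ultimately show False using P2 by linarith
qed

lemma persistently_exciting_relation_vanishes: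
  fixes V :: "nat \<Rightarrow> nat \<Rightarrow> real"
  assumes PE: "persistently_exciting m P L ud" and PL: "P \<le> L"
    and rel: "\<forall>j. j + P \<le> L \<longrightarrow> (\<Sum>q<P. \<Sum>l<m. V q l * ud (j + q) $ l) = 0"
  shows "\<forall>q<P. \<forall>l<m. V q l = 0"
proof -
  let ?H = "hankel m P L ud"
  define z where "z = vec (m * P) (\<lambda>r. V (r div m) (r mod m))"
  have H: "?H \<in> carrier_mat (m * P) (L - P + 1)" unfolding hankel_def by simp
  have z: "z \<in> carrier_vec (m * P)" unfolding z_def by simp
  have "col ?H j \<bullet> z = 0" if j: "j < L - P + 1" for j
  proof -
    have "col ?H j \<bullet> z = (\<Sum>r<P * m. ?H $$ (r, j) * z $ r)"
      unfolding scalar_prod_def using z H j by (simp add: atLeast0LessThan mult.commute)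
    also have "\<dots> = (\<Sum>q<P. \<Sum>l<m. V q l * ud (j + q) $ l)"
      unfolding sum_lessThan_mult_split
    proof (intro sum.cong refl)
      fix q l assume "q \<in> {..<P}" "l \<in> {..<m}"
      then have "q * m + l < m * P" "(q * m + l) div m = q" "(q * m + l) mod m = l"
        using mult_add_less_mult[of q P l m] by (auto simp: mult.commute)
      then show "?H $$ (q * m + l, j) * z $ (q * m + l) = V q l * ud (j + q) $ l"
        using j by (simp add: hankel_def z_def add.commute)
    qed
    also have "\<dots> = 0" using rel j PL by simp
    finally show ?thesis .
  qed
  then have z0: "z = 0\<^sub>v (m * P)"
    using full_row_rank_left_kernel[OF H _ z] PE H
    unfolding persistently_exciting_def full_row_rank_def by simp
  show ?thesis
  proof (intro allI impI)
    fix q l assume "q < P" "l < m"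
    then show "V q l = 0"
      using arg_cong[OF z0, of "\<lambda>v. v $ (q * m + l)"] mult_add_less_mult[of q P l m]
      by (simp add: z_def mult.commute)
  qed
qed

lemma sum_coeff_difference:
  fixes W U :: "nat \<Rightarrow> nat \<Rightarrow> real"
  assumes KP: "K < P"
  shows "(\<Sum>q<P. \<Sum>l<m. ((if 1 \<le> q \<and> q - 1 < K then W (q - 1) l else 0) - (if q < K then W q l else 0)) * U q l)
       = (\<Sum>q<K. \<Sum>l<m. W q l * U (Suc q) l) - (\<Sum>q<K. \<Sum>l<m. W q l * U q l)"
proof -
  obtain P' where P': "P = Suc P'" using KP by (cases P) auto
  have "(\<Sum>q<P. \<Sum>l<m. (if 1 \<le> q \<and> q - 1 < K then W (q - 1) l else 0) * U q l)
      = (\<Sum>q<P'. if q < K then (\<Sum>l<m. W q l * U (Suc q) l) else 0)"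
    unfolding P' sum.lessThan_Suc_shift by (simp, intro sum.cong refl, simp)
  also have "\<dots> = (\<Sum>q<K. \<Sum>l<m. W q l * U (Suc q) l)"
    by (rule sum_lessThan_restrict) (use KP P' in simp)
  finally have shifted: "(\<Sum>q<P. \<Sum>l<m. (if 1 \<le> q \<and> q - 1 < K then W (q - 1) l else 0) * U q l)
      = (\<Sum>q<K. \<Sum>l<m. W q l * U (Suc q) l)" .
  have "(\<Sum>q<P. \<Sum>l<m. (if q < K then W q l else 0) * U q l)
      = (\<Sum>q<P. if q < K then (\<Sum>l<m. W q l * U q l) else 0)"
    by (intro sum.cong refl) auto
  also have "\<dots> = (\<Sum>q<K. \<Sum>l<m. W q l * U q l)"
    by (rule sum_lessThan_restrict) (use KP in simp)
  finally show ?thesis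
    unfolding shifted[symmetric] by (simp add: algebra_simps sum_subtractf)
qed

text \<open>Subtracting an inhomogeneous relation of length \<open>K < P\<close> on the windows at \<open>j\<close> and
  \<open>j + 1\<close> gives a homogeneous relation of length \<open>K + 1\<close>, whose coefficients are the
  differences of consecutive coefficients of the original one.\<close>

lemma input_relation_vanishes:
  fixes W :: "nat \<Rightarrow> nat \<Rightarrow> real" and \<gamma> :: real
  assumes PE: "persistently_exciting m P L ud" and KP: "K < P" and PL: "P \<le> L"
    and rel: "\<forall>j. j + K \<le> L \<longrightarrow> (\<Sum>q<K. \<Sum>l<m. W q l * ud (j + q) $ l) + \<gamma> = 0"
  shows "\<forall>q<K. \<forall>l<m. W q l = 0"
proof -
  define V where
    "V q l = (if 1 \<le> q \<and> q - 1 < K then W (q - 1) l else 0) - (if q < K then W q l else 0)" for q l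
  have "(\<Sum>q<P. \<Sum>l<m. V q l * ud (j + q) $ l) = 0" if j: "j + P \<le> L" for j
    using sum_coeff_difference[OF KP, where m = m and W = W and U = "\<lambda>q l. ud (j + q) $ l"]
      rel[rule_format, of j] rel[rule_format, of "Suc j"] j KP
    unfolding V_def by simp
  then have V0: "\<forall>q<P. \<forall>l<m. V q l = 0"
    by (intro persistently_exciting_relation_vanishes[OF PE PL]) auto
  show ?thesis
  proof (intro allI impI)
    fix q l assume "q < K" "l < m"
    then show "W q l = 0"
    proof (induction q)
      case 0
      then show ?case using V0[rule_format, of 0 l] KP by (simp add: V_def)
    next
      case (Suc q)
      then show ?case using V0[rule_format, of "Suc q" l] KP by (simp add: V_def)
    qed
  qed
qed


section \<open>The fundamental lemma for affine systems\<close>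

text \<open>Block \<open>t\<close> of the product \<open>H(\<sigma>) \<alpha>\<close> of a Hankel matrix with a weight vector.\<close>

definition window_comb :: "nat \<Rightarrow> nat \<Rightarrow> real vec \<Rightarrow> (nat \<Rightarrow> real vec) \<Rightarrow> nat \<Rightarrow> real vec" where
  "window_comb p N \<alpha> \<sigma> t = vec p (\<lambda>c. \<Sum>j<N. \<alpha> $ j * \<sigma> (t + j) $ c)"

lemma window_comb_carrier [simp]: "window_comb p N \<alpha> \<sigma> t \<in> carrier_vec p"
  and dim_window_comb [simp]: "dim_vec (window_comb p N \<alpha> \<sigma> t) = p"
  and index_window_comb [simp]: "c < p \<Longrightarrow> window_comb p N \<alpha> \<sigma> t $ c = (\<Sum>j<N. \<alpha> $ j * \<sigma> (t + j) $ c)"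
  unfolding window_comb_def by simp_all

lemma mult_mat_vec_window_comb:
  assumes M: "M \<in> carrier_mat a b" and \<sigma>: "\<forall>j<N. \<sigma> (t + j) \<in> carrier_vec b" and r: "r < a"
  shows "(M *\<^sub>v window_comb b N \<alpha> \<sigma> t) $ r = (\<Sum>j<N. \<alpha> $ j * (M *\<^sub>v \<sigma> (t + j)) $ r)"
proof -
  have "(M *\<^sub>v window_comb b N \<alpha> \<sigma> t) $ r = (\<Sum>c<b. M $$ (r, c) * (\<Sum>j<N. \<alpha> $ j * \<sigma> (t + j) $ c))"
    using M r by (simp add: scalar_prod_def window_comb_def atLeast0LessThan)
  also have "\<dots> = (\<Sum>j<N. \<alpha> $ j * (\<Sum>c<b. M $$ (r, c) * \<sigma> (t + j) $ c))"
    by (simp add: sum_distrib_left mult.left_commute sum.swap[of _ "{..<b}"])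
  also have "\<dots> = (\<Sum>j<N. \<alpha> $ j * (M *\<^sub>v \<sigma> (t + j)) $ r)"
  proof (intro sum.cong refl)
    fix j assume "j \<in> {..<N}"
    then have "\<sigma> (t + j) \<in> carrier_vec b" using \<sigma> by simp
    then show "\<alpha> $ j * (\<Sum>c<b. M $$ (r, c) * \<sigma> (t + j) $ c) = \<alpha> $ j * (M *\<^sub>v \<sigma> (t + j)) $ r"
      using M r by (simp add: scalar_prod_def atLeast0LessThan)
  qed
  finally show ?thesis .
qed

locale affine_data =
  fixes n m :: nat and A B :: "real mat" and s :: "real vec"
    and xd ud :: "nat \<Rightarrow> real vec" and L :: nat
  assumes A: "A \<in> carrier_mat n n" and B: "B \<in> carrier_mat n m" and s: "s \<in> carrier_vec n"
    and data_carrier: "\<forall>t<L. xd t \<in> carrier_vec n \<and> ud t \<in> carrier_vec m"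
    and data_step: "\<forall>t. t + 1 < L \<longrightarrow> xd (t + 1) = A *\<^sub>v xd t + B *\<^sub>v ud t + s"
begin

lemma xd_carrier: "t < L \<Longrightarrow> xd t \<in> carrier_vec n"
  using data_carrier by auto

lemma ud_carrier: "t < L \<Longrightarrow> ud t \<in> carrier_vec m"
  using data_carrier by auto

lemma pow_mult_B_carrier: "A ^\<^sub>m p * B \<in> carrier_mat n m"
  using A B by (metis mult_carrier_mat pow_carrier_mat)

definition markov_coeff :: "real vec \<Rightarrow> nat \<Rightarrow> nat \<Rightarrow> real" where
  "markov_coeff \<xi> p l = ((A ^\<^sub>m p * B)\<^sup>T *\<^sub>v \<xi>) $ l"

lemma markov_coeff_eq_col:
  assumes "l < m"
  shows "markov_coeff \<xi> p l = col (A ^\<^sub>m p * B) l \<bullet> \<xi>"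
proof -
  have dc: "dim_col (A ^\<^sub>m p * B) = m" using pow_mult_B_carrier[of p] by blast
  have "markov_coeff \<xi> p l = row ((A ^\<^sub>m p * B)\<^sup>T) l \<bullet> \<xi>"
    unfolding markov_coeff_def using assms dc by (simp only: index_mult_mat_vec index_transpose_mat)
  then show ?thesis using assms dc by simp
qed

lemma scalar_prod_pow_mult_B:
  assumes xi: "\<xi> \<in> carrier_vec n" and u: "u \<in> carrier_vec m"
  shows "\<xi> \<bullet> (A ^\<^sub>m p *\<^sub>v (B *\<^sub>v u)) = (\<Sum>l<m. markov_coeff \<xi> p l * u $ l)"
proof -
  have P: "A ^\<^sub>m p \<in> carrier_mat n n" using A by simp
  have "\<xi> \<bullet> (A ^\<^sub>m p *\<^sub>v (B *\<^sub>v u)) = ((A ^\<^sub>m p * B)\<^sup>T *\<^sub>v \<xi>) \<bullet> u"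
    using assoc_mult_mat_vec[OF P B u] transpose_vec_mult_scalar[OF pow_mult_B_carrier u xi] by simp
  then show ?thesis
    unfolding scalar_prod_def markov_coeff_def using u by (simp add: atLeast0LessThan)
qed

lemma markov_coeff_shift:
  assumes xi: "\<xi> \<in> carrier_vec n" and l: "l < m"
  shows "\<xi> \<bullet> (A ^\<^sub>m t *\<^sub>v ((A ^\<^sub>m p * B) *\<^sub>v unit_vec m l)) = markov_coeff \<xi> (t + p) l"
proof -
  have Pt: "A ^\<^sub>m t \<in> carrier_mat n n" and Pp: "A ^\<^sub>m p \<in> carrier_mat n n" using A by auto
  have "A ^\<^sub>m t *\<^sub>v ((A ^\<^sub>m p * B) *\<^sub>v unit_vec m l) = (A ^\<^sub>m (t + p) * B) *\<^sub>v unit_vec m l"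
    using assoc_mult_mat_vec[OF Pt pow_mult_B_carrier unit_vec_carrier] assoc_mult_mat[OF Pt Pp B]
      pow_mat_add[OF A] by simp
  moreover have "markov_coeff \<xi> (t + p) l = ((A ^\<^sub>m (t + p) * B)\<^sup>T *\<^sub>v \<xi>) \<bullet> unit_vec m l"
    unfolding markov_coeff_def using l by simp
  ultimately show ?thesis
    using transpose_vec_mult_scalar[OF pow_mult_B_carrier unit_vec_carrier xi] by simp
qed

lemma data_state_expansion:
  assumes xi: "\<xi> \<in> carrier_vec n"
  shows "j + t < L \<Longrightarrow> \<xi> \<bullet> xd (j + t) = \<xi> \<bullet> (A ^\<^sub>m t *\<^sub>v xd j)
      + (\<Sum>r<t. \<xi> \<bullet> (A ^\<^sub>m (t - 1 - r) *\<^sub>v (B *\<^sub>v ud (j + r))))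
      + (\<Sum>r<t. \<xi> \<bullet> (A ^\<^sub>m (t - 1 - r) *\<^sub>v s))"
proof (induction t arbitrary: j)
  case 0
  then show ?case using A xd_carrier by simp
next
  case (Suc t)
  have xj: "xd j \<in> carrier_vec n" and uj: "ud j \<in> carrier_vec m"
    using Suc.prems xd_carrier ud_carrier by auto
  have P: "A ^\<^sub>m t \<in> carrier_mat n n" using A by simp
  have "A ^\<^sub>m t *\<^sub>v xd (j + 1) = A ^\<^sub>m t *\<^sub>v (A *\<^sub>v xd j) + A ^\<^sub>m t *\<^sub>v (B *\<^sub>v ud j) + A ^\<^sub>m t *\<^sub>v s"
    using data_step Suc.prems A B s xj uj P
    by (simp add: mult_add_distrib_mat_vec[OF P] del: pow_mat.simps)
  also have "A ^\<^sub>m t *\<^sub>v (A *\<^sub>v xd j) = A ^\<^sub>m Suc t *\<^sub>v xd j"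
    using assoc_mult_mat_vec[OF P A xj] by simp
  moreover have "A ^\<^sub>m Suc t *\<^sub>v xd j \<in> carrier_vec n" "A ^\<^sub>m t *\<^sub>v (B *\<^sub>v ud j) \<in> carrier_vec n"
    "A ^\<^sub>m t *\<^sub>v s \<in> carrier_vec n"
    using A B s xj uj P by (metis mult_mat_vec_carrier pow_carrier_mat)+
  ultimately have "\<xi> \<bullet> (A ^\<^sub>m t *\<^sub>v xd (j + 1)) = \<xi> \<bullet> (A ^\<^sub>m Suc t *\<^sub>v xd j)
      + \<xi> \<bullet> (A ^\<^sub>m t *\<^sub>v (B *\<^sub>v ud j)) + \<xi> \<bullet> (A ^\<^sub>m t *\<^sub>v s)"
    using xi by (simp add: scalar_prod_add_distrib del: pow_mat.simps)
  moreover have "\<xi> \<bullet> xd (j + 1 + t) = \<xi> \<bullet> (A ^\<^sub>m t *\<^sub>v xd (j + 1))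
      + (\<Sum>r<t. \<xi> \<bullet> (A ^\<^sub>m (t - 1 - r) *\<^sub>v (B *\<^sub>v ud (j + 1 + r))))
      + (\<Sum>r<t. \<xi> \<bullet> (A ^\<^sub>m (t - 1 - r) *\<^sub>v s))"
    by (rule Suc.IH) (use Suc.prems in simp)
  ultimately show ?case unfolding sum.lessThan_Suc_shift by simp
qed

text \<open>The \<open>n + 1\<close> vectors \<open>(A\<^sup>t)\<^sup>T \<xi>\<close>, \<open>t \<le> n\<close>, are dependent; normalising the top
  nonzero coefficient of a dependence gives a monic \<open>a\<close> with \<open>\<xi>\<^sup>T a(A) = 0\<close>.\<close>

lemma exists_annihilator:
  assumes xi: "\<xi> \<in> carrier_vec n"
  shows "\<exists>a D. D \<le> n \<and> a D = 1 \<and> (\<forall>v\<in>carrier_vec n. (\<Sum>t\<le>D. a t * (\<xi> \<bullet> (A ^\<^sub>m t *\<^sub>v v))) = 0)"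
proof -
  define \<kappa> where "\<kappa> t = (A ^\<^sub>m t)\<^sup>T *\<^sub>v \<xi>" for t
  have "\<forall>t\<le>n. \<kappa> t \<in> carrier_vec n" unfolding \<kappa>_def using A xi
    by (metis mult_mat_vec_carrier pow_carrier_mat transpose_carrier_mat)
  then obtain c where c: "\<exists>t\<le>n. c t \<noteq> 0" "\<forall>i<n. (\<Sum>t\<le>n. c t * \<kappa> t $ i) = 0"
    using exists_linear_dependence by blast
  define D where "D = Max {t. t \<le> n \<and> c t \<noteq> 0}"
  have fin: "finite {t. t \<le> n \<and> c t \<noteq> 0}" by simp
  have Dn: "D \<le> n" and cD: "c D \<noteq> 0"
    using Max_in[OF fin] c(1) unfolding D_def by auto
  have above: "c t = 0" if "D < t" "t \<le> n" for t
  proof (rule ccontr)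
    assume "c t \<noteq> 0"
    then have "t \<le> D" using Max_ge[OF fin, of t] that unfolding D_def by simp
    then show False using that by simp
  qed
  have "(\<Sum>t\<le>D. (c t / c D) * (\<xi> \<bullet> (A ^\<^sub>m t *\<^sub>v v))) = 0" if v: "v \<in> carrier_vec n" for v
  proof -
    have tr: "\<xi> \<bullet> (A ^\<^sub>m t *\<^sub>v v) = (\<Sum>i<n. \<kappa> t $ i * v $ i)" for t
    proof -
      have "\<xi> \<bullet> (A ^\<^sub>m t *\<^sub>v v) = \<kappa> t \<bullet> v"
        unfolding \<kappa>_def using transpose_vec_mult_scalar[of "A ^\<^sub>m t" n n v \<xi>] A v xi by simp
      then show ?thesis unfolding scalar_prod_def using v by (simp add: atLeast0LessThan)
    qed
    have "(\<Sum>t\<le>D. c t * (\<xi> \<bullet> (A ^\<^sub>m t *\<^sub>v v))) = (\<Sum>t\<le>n. c t * (\<xi> \<bullet> (A ^\<^sub>m t *\<^sub>v v)))"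
      by (rule sum.mono_neutral_left) (use Dn above in auto)
    also have "\<dots> = (\<Sum>i<n. (\<Sum>t\<le>n. c t * \<kappa> t $ i) * v $ i)"
      unfolding tr by (simp add: sum_distrib_left sum_distrib_right mult.assoc sum.swap[of _ "{..n}"])
    also have "\<dots> = 0" using c(2) by simp
    finally show ?thesis by (simp add: sum_divide_distrib[symmetric])
  qed
  then show ?thesis using Dn cD by (intro exI[of _ "\<lambda>t. c t / c D"] exI[of _ D]) auto
qed

lemma controllable_markov_coeff_vanish:
  assumes m: "m > 0" and ctrb: "controllable n m A B" and xi: "\<xi> \<in> carrier_vec n"
    and zero: "\<forall>p l. l < m \<longrightarrow> markov_coeff \<xi> p l = 0"
  shows "\<xi> = 0\<^sub>v n"
proof (rule full_row_rank_left_kernel[of "ctrb_matrix n m A B" n "n * m"])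
  show "ctrb_matrix n m A B \<in> carrier_mat n (n * m)" unfolding ctrb_matrix_def by simp
  show "vec_space.rank n (ctrb_matrix n m A B) = n" using ctrb unfolding controllable_def .
  show "\<forall>j<n * m. col (ctrb_matrix n m A B) j \<bullet> \<xi> = 0"
  proof (intro allI impI)
    fix j assume j: "j < n * m"
    have jm: "j mod m < m" using m by simp
    have "col (ctrb_matrix n m A B) j = col (A ^\<^sub>m (j div m) * B) (j mod m)"
      unfolding ctrb_matrix_def col_def using j jm pow_mult_B_carrier[of "j div m"]
      by (intro eq_vecI) auto
    then show "col (ctrb_matrix n m A B) j \<bullet> \<xi> = 0"
      using zero markov_coeff_eq_col[OF jm, of \<xi> "j div m"] jm by simp
  qed
qed (rule xi)

text \<open>Combining the relation on the windows starting at \<open>j, \<dots>, j + D\<close> with the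
  coefficients of the annihilator of \<open>\<xi>\<close> cancels the state \<open>xd j\<close>; what remains is
  a relation between the inputs alone.\<close>

lemma window_relation_eliminate_state:
  fixes \<eta> :: "nat \<Rightarrow> nat \<Rightarrow> real" and a :: "nat \<Rightarrow> real"
  assumes xi: "\<xi> \<in> carrier_vec n" and k: "k > 0"
    and rel: "\<forall>j. j + k \<le> L \<longrightarrow> \<xi> \<bullet> xd j + (\<Sum>i<k. \<Sum>l<m. \<eta> i l * ud (j + i) $ l) + \<beta> = 0"
    and annih: "\<forall>v\<in>carrier_vec n. (\<Sum>t\<le>D. a t * (\<xi> \<bullet> (A ^\<^sub>m t *\<^sub>v v))) = 0"
  defines "W \<equiv> \<lambda>q l. (\<Sum>t\<le>D. a t * (if q < t then markov_coeff \<xi> (t - 1 - q) l else 0))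
                  + (\<Sum>t\<le>D. a t * (if t \<le> q \<and> q - t < k then \<eta> (q - t) l else 0))"
    and "\<gamma> \<equiv> \<Sum>t\<le>D. a t * ((\<Sum>r<t. \<xi> \<bullet> (A ^\<^sub>m (t - 1 - r) *\<^sub>v s)) + \<beta>)"
  shows "\<forall>j. j + (k + D) \<le> L \<longrightarrow> (\<Sum>q<k + D. \<Sum>l<m. W q l * ud (j + q) $ l) + \<gamma> = 0"
proof (intro allI impI)
  fix j assume jK: "j + (k + D) \<le> L"
  define U where "U q l = ud (j + q) $ l" for q l
  have xj: "xd j \<in> carrier_vec n" using xd_carrier jK k by simp
  have expand: "\<xi> \<bullet> xd (j + t) = \<xi> \<bullet> (A ^\<^sub>m t *\<^sub>v xd j)
      + (\<Sum>r<t. \<Sum>l<m. markov_coeff \<xi> (t - 1 - r) l * U r l) + (\<Sum>r<t. \<xi> \<bullet> (A ^\<^sub>m (t - 1 - r) *\<^sub>v s))"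
    if "t \<le> D" for t
    using data_state_expansion[OF xi, of j t] that jK k xi ud_carrier
    by (simp add: U_def scalar_prod_pow_mult_B)
  have "\<xi> \<bullet> xd (j + t) + (\<Sum>i<k. \<Sum>l<m. \<eta> i l * U (t + i) l) + \<beta> = 0" if "t \<le> D" for t
    using rel[rule_format, of "j + t"] that jK by (simp add: U_def add.assoc)
  then have "0 = (\<Sum>t\<le>D. a t * (\<xi> \<bullet> xd (j + t) + (\<Sum>i<k. \<Sum>l<m. \<eta> i l * U (t + i) l) + \<beta>))"
    by simp
  also have "\<dots> = (\<Sum>t\<le>D. a t * (\<xi> \<bullet> (A ^\<^sub>m t *\<^sub>v xd j)
      + (\<Sum>r<t. \<Sum>l<m. markov_coeff \<xi> (t - 1 - r) l * U r l) + (\<Sum>r<t. \<xi> \<bullet> (A ^\<^sub>m (t - 1 - r) *\<^sub>v s))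
      + (\<Sum>i<k. \<Sum>l<m. \<eta> i l * U (t + i) l) + \<beta>))"
    by (intro sum.cong refl) (simp add: expand)
  also have "\<dots> = (\<Sum>t\<le>D. a t * (\<xi> \<bullet> (A ^\<^sub>m t *\<^sub>v xd j)))
      + (\<Sum>t\<le>D. a t * (\<Sum>r<t. \<Sum>l<m. markov_coeff \<xi> (t - 1 - r) l * U r l))
      + (\<Sum>t\<le>D. a t * (\<Sum>i<k. \<Sum>l<m. \<eta> i l * U (t + i) l)) + \<gamma>"
    unfolding \<gamma>_def by (simp add: distrib_left sum.distrib algebra_simps)
  also have "(\<Sum>t\<le>D. a t * (\<xi> \<bullet> (A ^\<^sub>m t *\<^sub>v xd j))) = 0"
    using annih xj by simp
  also have "(\<Sum>t\<le>D. a t * (\<Sum>r<t. \<Sum>l<m. markov_coeff \<xi> (t - 1 - r) l * U r l))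
      = (\<Sum>q<k + D. \<Sum>l<m. (\<Sum>t\<le>D. a t * (if q < t then markov_coeff \<xi> (t - 1 - q) l else 0)) * U q l)"
    by (rule sum_convolution_past_regroup) simp
  also have "(\<Sum>t\<le>D. a t * (\<Sum>i<k. \<Sum>l<m. \<eta> i l * U (t + i) l))
      = (\<Sum>q<k + D. \<Sum>l<m. (\<Sum>t\<le>D. a t * (if t \<le> q \<and> q - t < k then \<eta> (q - t) l else 0)) * U q l)"
    by (rule sum_convolution_future_regroup) simp
  finally show "(\<Sum>q<k + D. \<Sum>l<m. W q l * ud (j + q) $ l) + \<gamma> = 0"
    unfolding W_def by (simp add: U_def distrib_right sum.distrib)
qed

lemma window_relation_trivial:
  fixes \<eta> :: "nat \<Rightarrow> nat \<Rightarrow> real"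
  assumes m: "m > 0" and k: "k > 0" and ctrb: "controllable n m A B"
    and PE: "persistently_exciting m (n + k + 1) L ud"
    and xi: "\<xi> \<in> carrier_vec n"
    and rel: "\<forall>j. j + k \<le> L \<longrightarrow> \<xi> \<bullet> xd j + (\<Sum>i<k. \<Sum>l<m. \<eta> i l * ud (j + i) $ l) + \<beta> = 0"
  shows "\<xi> = 0\<^sub>v n" and "\<forall>i<k. \<forall>l<m. \<eta> i l = 0" and "\<beta> = 0"
proof -
  obtain a D where D: "D \<le> n" and aD: "a D = 1"
    and annih: "\<forall>v\<in>carrier_vec n. (\<Sum>t\<le>D. a t * (\<xi> \<bullet> (A ^\<^sub>m t *\<^sub>v v))) = 0"
    using exists_annihilator[OF xi] by blast
  have L: "n + k + 1 \<le> L" using persistently_exciting_length[OF m PE] k by simp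
  have "k + D < n + k + 1" using D by simp
  note W0 = input_relation_vanishes[OF PE this L window_relation_eliminate_state[OF xi k rel annih]]
  have W0l: "\<forall>q<k + D. (\<Sum>t\<le>D. a t * (if q < t then markov_coeff \<xi> (t - 1 - q) l else 0))
                  + (\<Sum>t\<le>D. a t * (if t \<le> q \<and> q - t < k then \<eta> (q - t) l else 0)) = 0"
    if "l < m" for l
    using W0 that by blast
  have \<eta>0: "\<forall>i<k. \<eta> i l = 0" and init: "\<forall>r<D. markov_coeff \<xi> r l = 0" if "l < m" for l
    using convolution_coeffs_vanish[of a D k "\<lambda>r. markov_coeff \<xi> r l" "\<lambda>i. \<eta> i l", OF aD W0l[OF that]]
    by blast+
  have "markov_coeff \<xi> r l = 0" if l: "l < m" for r l
  proof (rule monic_recurrence_vanishes[of a D, OF aD init[OF l]], intro allI)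
    fix p
    show "(\<Sum>t\<le>D. a t * markov_coeff \<xi> (t + p) l) = 0"
      using annih[rule_format, of "(A ^\<^sub>m p * B) *\<^sub>v unit_vec m l"] pow_mult_B_carrier[of p]
      by (simp add: markov_coeff_shift[OF xi l])
  qed
  then show \<xi>0: "\<xi> = 0\<^sub>v n" using controllable_markov_coeff_vanish[OF m ctrb xi] by blast
  show "\<forall>i<k. \<forall>l<m. \<eta> i l = 0" using \<eta>0 by blast
  then show "\<beta> = 0"
    using rel[rule_format, of 0] L \<xi>0 xd_carrier[of 0] by simp
qed

text \<open>The matrix with rows \<open>1\<^sup>T\<close>, \<open>H\<^sub>1(xd)\<close> and \<open>H\<^sub>k(ud)\<close>.\<close>

definition data_matrix :: "nat \<Rightarrow> real mat" where
  "data_matrix k = mat (1 + n + k * m) (L - k + 1) (\<lambda>(r, j).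
     if r = 0 then 1 else if r \<le> n then xd j $ (r - 1)
     else ud (j + (r - 1 - n) div m) $ ((r - 1 - n) mod m))"

lemma data_matrix_carrier: "data_matrix k \<in> carrier_mat (1 + n + k * m) (L - k + 1)"
  unfolding data_matrix_def by simp

lemma data_matrix_index:
  assumes "j < L - k + 1"
  shows "data_matrix k $$ (0, j) = 1"
    and "c < n \<Longrightarrow> data_matrix k $$ (1 + c, j) = xd j $ c"
    and "i < k \<Longrightarrow> l < m \<Longrightarrow> data_matrix k $$ (1 + n + (i * m + l), j) = ud (j + i) $ l"
  using assms mult_add_less_mult[of i k l m] by (simp_all add: data_matrix_def)

lemma col_data_matrix_scalar_prod:
  assumes j: "j < L - k + 1" and z: "z \<in> carrier_vec (1 + n + k * m)"
  shows "col (data_matrix k) j \<bullet> z = z $ 0 + (\<Sum>c<n. xd j $ c * z $ (1 + c))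
      + (\<Sum>i<k. \<Sum>l<m. ud (j + i) $ l * z $ (1 + n + (i * m + l)))"
proof -
  have "col (data_matrix k) j \<bullet> z = (\<Sum>r<1 + n + k * m. data_matrix k $$ (r, j) * z $ r)"
    unfolding scalar_prod_def using z j data_matrix_carrier[of k]
    by (intro sum.cong) (auto simp: atLeast0LessThan)
  then show ?thesis
    unfolding sum_lessThan_block_split using data_matrix_index[OF j] by simp
qed

lemma data_matrix_left_kernel_trivial:
  assumes m: "m > 0" and k: "k > 0" and ctrb: "controllable n m A B"
    and PE: "persistently_exciting m (n + k + 1) L ud"
  shows "\<forall>z\<in>carrier_vec (1 + n + k * m). (data_matrix k)\<^sup>T *\<^sub>v z = 0\<^sub>v (L - k + 1) \<longrightarrow> z = 0\<^sub>v (1 + n + k * m)"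
proof (intro ballI impI)
  fix z :: "real vec" assume z: "z \<in> carrier_vec (1 + n + k * m)"
    and Mz: "(data_matrix k)\<^sup>T *\<^sub>v z = 0\<^sub>v (L - k + 1)"
  define \<xi> where "\<xi> = vec n (\<lambda>c. z $ (1 + c))"
  define \<eta> where "\<eta> i l = z $ (1 + n + (i * m + l))" for i l
  have xi: "\<xi> \<in> carrier_vec n" unfolding \<xi>_def by simp
  have "\<xi> \<bullet> xd j + (\<Sum>i<k. \<Sum>l<m. \<eta> i l * ud (j + i) $ l) + z $ 0 = 0" if jk: "j + k \<le> L" for j
  proof -
    have j: "j < L - k + 1" using jk by simp
    have "0 = col (data_matrix k) j \<bullet> z"
      using arg_cong[OF Mz, of "\<lambda>v. v $ j"] data_matrix_carrier[of k] j by simp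
    also have "\<dots> = \<xi> \<bullet> xd j + (\<Sum>i<k. \<Sum>l<m. \<eta> i l * ud (j + i) $ l) + z $ 0"
      unfolding col_data_matrix_scalar_prod[OF j z] using xd_carrier[of j] jk k
      by (simp add: \<xi>_def \<eta>_def scalar_prod_def atLeast0LessThan mult.commute)
    finally show ?thesis by simp
  qed
  then have \<xi>0: "\<xi> = 0\<^sub>v n" and \<eta>0: "\<forall>i<k. \<forall>l<m. \<eta> i l = 0" and z0: "z $ 0 = 0"
    using window_relation_trivial[OF m k ctrb PE xi] by blast+
  have "z $ r = 0" if r: "r < 1 + n + k * m" for r
    using r
  proof (cases rule: less_block_index_cases)
    case (2 c)
    then show ?thesis using arg_cong[OF \<xi>0, of "\<lambda>v. v $ c"] by (simp add: \<xi>_def)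
  next
    case (3 i l)
    then show ?thesis using \<eta>0 by (simp add: \<eta>_def)
  qed (use z0 in simp)
  then show "z = 0\<^sub>v (1 + n + k * m)" using z by (intro eq_vecI) auto
qed

lemma fundamental_lemma:
  assumes m: "m > 0" and k: "k > 0" and ctrb: "controllable n m A B"
    and PE: "persistently_exciting m (n + k + 1) L ud"
    and x0: "x0 \<in> carrier_vec n" and uu: "\<forall>i<k. uu i \<in> carrier_vec m"
  shows "\<exists>\<alpha> \<in> carrier_vec (L - k + 1). (\<Sum>j<L - k + 1. \<alpha> $ j) = 1
     \<and> window_comb n (L - k + 1) \<alpha> xd 0 = x0
     \<and> (\<forall>i<k. window_comb m (L - k + 1) \<alpha> ud i = uu i)"
proof -
  let ?M = "data_matrix k" and ?N = "L - k + 1" and ?R = "1 + n + k * m"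
  define b where "b = vec ?R (\<lambda>r. if r = 0 then 1 else if r \<le> n then x0 $ (r - 1)
      else uu ((r - 1 - n) div m) $ ((r - 1 - n) mod m))"
  have b: "b \<in> carrier_vec ?R" unfolding b_def by simp
  have uu_dim: "dim_vec (uu i) = m" if "i < k" for i using uu that by auto
  obtain y where y: "y \<in> carrier_vec ?N" and My: "?M *\<^sub>v y = b"
    using mult_mat_vec_surj_if_left_kernel_trivial[OF data_matrix_carrier
        data_matrix_left_kernel_trivial[OF m k ctrb PE] b] by blast
  have row: "(\<Sum>j<?N. ?M $$ (r, j) * y $ j) = b $ r" if "r < ?R" for r
  proof -
    have "(?M *\<^sub>v y) $ r = (\<Sum>j<?N. ?M $$ (r, j) * y $ j)"
      using that y data_matrix_carrier[of k] unfolding mult_mat_vec_def scalar_prod_def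
      by (simp add: atLeast0LessThan row_def del: sum.lessThan_Suc)
    then show ?thesis using My by simp
  qed
  have "(\<Sum>j<?N. y $ j) = 1" using row[of 0] data_matrix_index(1) by (simp add: b_def)
  moreover have "window_comb n ?N y xd 0 = x0"
  proof (rule eq_vecI)
    fix c assume "c < dim_vec x0"
    then show "window_comb n ?N y xd 0 $ c = x0 $ c"
      using row[of "1 + c"] data_matrix_index(2) x0 by (simp add: b_def mult.commute)
  qed (use x0 in simp)
  moreover have "window_comb m ?N y ud i = uu i" if i: "i < k" for i
  proof (rule eq_vecI)
    fix l assume "l < dim_vec (uu i)"
    then have l: "l < m" using uu_dim[OF i] by simp
    then show "window_comb m ?N y ud i $ l = uu i $ l"
      using row[of "1 + n + (i * m + l)"] data_matrix_index(3)[OF _ i l] mult_add_less_mult[OF i l]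
      by (simp add: b_def mult.commute add.commute)
  qed (use uu_dim[OF i] in simp)
  ultimately show ?thesis using y by blast
qed

lemma window_comb_step:
  assumes \<alpha>1: "(\<Sum>j<N. \<alpha> $ j) = 1" and tN: "t + N < L"
  shows "window_comb n N \<alpha> xd (Suc t)
    = A *\<^sub>v window_comb n N \<alpha> xd t + B *\<^sub>v window_comb m N \<alpha> ud t + s"
proof (rule eq_vecI)
  fix r assume "r < dim_vec (A *\<^sub>v window_comb n N \<alpha> xd t + B *\<^sub>v window_comb m N \<alpha> ud t + s)"
  then have r: "r < n" using A s by simp
  have "(A *\<^sub>v window_comb n N \<alpha> xd t + B *\<^sub>v window_comb m N \<alpha> ud t + s) $ r
      = (\<Sum>j<N. \<alpha> $ j * ((A *\<^sub>v xd (t + j)) $ r + (B *\<^sub>v ud (t + j)) $ r + s $ r))"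
    using mult_mat_vec_window_comb[OF A _ r, of N xd t \<alpha>] mult_mat_vec_window_comb[OF B _ r, of N ud t \<alpha>]
      xd_carrier ud_carrier tN r A B s
    by (simp add: distrib_left sum.distrib sum_distrib_right[symmetric] \<alpha>1)
  also have "\<dots> = (\<Sum>j<N. \<alpha> $ j * xd (Suc t + j) $ r)"
    using data_step tN r A B s xd_carrier ud_carrier by (intro sum.cong refl) (simp add: add.commute)
  finally show "window_comb n N \<alpha> xd (Suc t) $ r
      = (A *\<^sub>v window_comb n N \<alpha> xd t + B *\<^sub>v window_comb m N \<alpha> ud t + s) $ r"
    using r by simp
qed (use A s in simp)

lemma trajectory_eq_window_comb:
  assumes \<alpha>1: "(\<Sum>j<N. \<alpha> $ j) = 1" and TN: "T + N \<le> L"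
    and x0: "x 0 = window_comb n N \<alpha> xd 0"
    and u: "\<forall>t<T. u t = window_comb m N \<alpha> ud t"
    and dyn: "\<forall>t<T. x (Suc t) = A *\<^sub>v x t + B *\<^sub>v u t + s"
  shows "t \<le> T \<Longrightarrow> x t = window_comb n N \<alpha> xd t"
proof (induction t)
  case (Suc t)
  then show ?case using dyn u window_comb_step[OF \<alpha>1, of t] TN by simp
qed (rule x0)

end


section \<open>The data-driven problem\<close>

lemma hankel_first_rows:
  assumes TL: "T < L"
  shows "mat_of_rows (L - T) (map (row (hankel n (T + 1) L xd)) [0..<n]) = mat n (L - T) (\<lambda>(c, j). xd j $ c)"
  by (rule eq_matI) (use TL in \<open>auto simp: mat_of_rows_index hankel_def row_def\<close>)

lemma Gamma_set_iff:
  assumes TL: "T < L"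
  shows "G \<in> Gamma_set n T L xd \<longleftrightarrow> G \<in> carrier_mat (L - T) n
     \<and> (\<forall>c<n. \<forall>c'<n. (\<Sum>j<L - T. xd j $ c * G $$ (j, c')) = (if c = c' then 1 else 0))
     \<and> (\<forall>c<n. (\<Sum>j<L - T. G $$ (j, c)) = 1)"
proof -
  let ?H = "mat n (L - T) (\<lambda>(c, j). xd j $ c)"
  have "?H * G = 1\<^sub>m n \<longleftrightarrow> (\<forall>c<n. \<forall>c'<n. (\<Sum>j<L - T. xd j $ c * G $$ (j, c')) = (if c = c' then 1 else 0))"
    and "G\<^sup>T *\<^sub>v ones_vec (L - T) = ones_vec n \<longleftrightarrow> (\<forall>c<n. (\<Sum>j<L - T. G $$ (j, c)) = 1)"
    if G: "G \<in> carrier_mat (L - T) n"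
    using G by (auto simp: mat_eq_iff vec_eq_iff ones_vec_def scalar_prod_def atLeast0LessThan)
  then show ?thesis unfolding Gamma_set_def hankel_first_rows[OF TL] by blast
qed

lemma Lambda_set_iff:
  assumes TL: "T < L"
  shows "g \<in> Lambda_set n T L xd \<longleftrightarrow> g \<in> carrier_vec (L - T)
     \<and> (\<forall>c<n. (\<Sum>j<L - T. xd j $ c * g $ j) = 0) \<and> (\<Sum>j<L - T. g $ j) = 1"
proof -
  let ?H = "mat n (L - T) (\<lambda>(c, j). xd j $ c)"
  have "?H *\<^sub>v g = 0\<^sub>v n \<longleftrightarrow> (\<forall>c<n. (\<Sum>j<L - T. xd j $ c * g $ j) = 0)"
    and "ones_vec (L - T) \<bullet> g = (\<Sum>j<L - T. g $ j)"
    if g: "g \<in> carrier_vec (L - T)"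
    using g by (auto simp: vec_eq_iff ones_vec_def scalar_prod_def atLeast0LessThan)
  then show ?thesis unfolding Lambda_set_def hankel_first_rows[OF TL] by auto
qed

lemma GG_mat_mult_vec:
  assumes G: "G \<in> carrier_mat N n" and x0: "x0 \<in> carrier_vec n"
  shows "GG_mat n G g *\<^sub>v (x0 @\<^sub>v ones_vec 1)
    = vec N (\<lambda>j. (\<Sum>c<n. (G $$ (j, c) - g $ j) * x0 $ c) + g $ j)"
proof (rule eq_vecI)
  fix j assume "j < dim_vec (vec N (\<lambda>j. (\<Sum>c<n. (G $$ (j, c) - g $ j) * x0 $ c) + g $ j))"
  then have j: "j < N" by simp
  have "(GG_mat n G g *\<^sub>v (x0 @\<^sub>v ones_vec 1)) $ j
      = (\<Sum>c<Suc n. GG_mat n G g $$ (j, c) * (x0 @\<^sub>v ones_vec 1) $ c)"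
    using j G x0 unfolding GG_mat_def ones_vec_def
    by (simp add: scalar_prod_def atLeast0LessThan del: sum.lessThan_Suc)
  also have "\<dots> = (\<Sum>c<n. (G $$ (j, c) - g $ j) * x0 $ c) + g $ j"
    using j G x0 unfolding GG_mat_def ones_vec_def by simp
  finally show "(GG_mat n G g *\<^sub>v (x0 @\<^sub>v ones_vec 1)) $ j
      = vec N (\<lambda>j. (\<Sum>c<n. (G $$ (j, c) - g $ j) * x0 $ c) + g $ j) $ j"
    using j by simp
qed (use G in \<open>simp add: GG_mat_def\<close>)

lemma GG_mat_comb_sum:
  assumes TL: "T < L" and G: "G \<in> Gamma_set n T L xd" and g: "g \<in> Lambda_set n T L xd"
    and x0: "x0 \<in> carrier_vec n"
  shows "(\<Sum>j<L - T. (GG_mat n G g *\<^sub>v (x0 @\<^sub>v ones_vec 1)) $ j) = 1"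
proof -
  have Gc: "G \<in> carrier_mat (L - T) n" and G1: "\<forall>c<n. (\<Sum>j<L - T. G $$ (j, c)) = 1"
    using G unfolding Gamma_set_iff[OF TL] by auto
  have g1: "(\<Sum>j<L - T. g $ j) = 1" using g unfolding Lambda_set_iff[OF TL] by auto
  have "(\<Sum>j<L - T. (GG_mat n G g *\<^sub>v (x0 @\<^sub>v ones_vec 1)) $ j)
      = (\<Sum>c<n. ((\<Sum>j<L - T. G $$ (j, c)) - (\<Sum>j<L - T. g $ j)) * x0 $ c) + (\<Sum>j<L - T. g $ j)"
    unfolding GG_mat_mult_vec[OF Gc x0]
    by (simp add: sum.distrib sum_subtractf sum_distrib_right left_diff_distrib sum.swap[of _ "{..<n}"])
  also have "\<dots> = 1" using G1 g1 by simp
  finally show ?thesis .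
qed

lemma GG_mat_comb_first_rows:
  assumes TL: "T < L" and G: "G \<in> Gamma_set n T L xd" and g: "g \<in> Lambda_set n T L xd"
    and x0: "x0 \<in> carrier_vec n"
  shows "window_comb n (L - T) (GG_mat n G g *\<^sub>v (x0 @\<^sub>v ones_vec 1)) xd 0 = x0"
proof (rule eq_vecI)
  let ?N = "L - T"
  have Gc: "G \<in> carrier_mat ?N n"
    and Gx: "\<forall>c<n. \<forall>c'<n. (\<Sum>j<?N. xd j $ c * G $$ (j, c')) = (if c = c' then 1 else 0)"
    using G unfolding Gamma_set_iff[OF TL] by auto
  have gx: "\<forall>c<n. (\<Sum>j<?N. xd j $ c * g $ j) = 0"
    using g unfolding Lambda_set_iff[OF TL] by auto
  define \<sigma> where "\<sigma> = (\<Sum>c<n. x0 $ c)"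
  have entry: "(GG_mat n G g *\<^sub>v (x0 @\<^sub>v ones_vec 1)) $ j = (\<Sum>c<n. G $$ (j, c) * x0 $ c) + (1 - \<sigma>) * g $ j"
    if "j < ?N" for j
    using that unfolding GG_mat_mult_vec[OF Gc x0] \<sigma>_def
    by (simp add: algebra_simps sum_subtractf sum_distrib_left sum_distrib_right)
  fix c assume "c < dim_vec x0"
  then have c: "c < n" using x0 by simp
  have "window_comb n ?N (GG_mat n G g *\<^sub>v (x0 @\<^sub>v ones_vec 1)) xd 0 $ c
      = (\<Sum>j<?N. xd j $ c * ((\<Sum>c'<n. G $$ (j, c') * x0 $ c') + (1 - \<sigma>) * g $ j))"
    using c entry by (simp add: mult.commute)
  also have "\<dots> = (\<Sum>j<?N. \<Sum>c'<n. x0 $ c' * (xd j $ c * G $$ (j, c'))) + (1 - \<sigma>) * (\<Sum>j<?N. xd j $ c * g $ j)"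
    by (simp add: distrib_left sum.distrib sum_distrib_left mult_ac)
  also have "(\<Sum>j<?N. \<Sum>c'<n. x0 $ c' * (xd j $ c * G $$ (j, c')))
      = (\<Sum>c'<n. x0 $ c' * (\<Sum>j<?N. xd j $ c * G $$ (j, c')))"
    by (subst sum.swap) (simp add: sum_distrib_left)
  also have "\<dots> = (\<Sum>c'<n. if c' = c then x0 $ c else 0)"
  proof -
    have "x0 $ c' * (\<Sum>j<?N. xd j $ c * G $$ (j, c')) = (if c' = c then x0 $ c else 0)" if "c' < n" for c'
      using Gx[rule_format, OF c that] by auto
    then show ?thesis by simp
  qed
  finally show "window_comb n ?N (GG_mat n G g *\<^sub>v (x0 @\<^sub>v ones_vec 1)) xd 0 $ c = x0 $ c"
    using c gx by (simp add: sum.delta)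
qed (use x0 in simp)

lemma stack_eq_hankel_iff:
  assumes \<alpha>: "\<alpha> \<in> carrier_vec (L - T)" and TL: "T < L" and zc: "\<forall>t\<le>T. z t \<in> carrier_vec p"
  shows "stack p T z = hankel p (T + 1) L \<sigma> *\<^sub>v \<alpha> \<longleftrightarrow> (\<forall>t\<le>T. z t = window_comb p (L - T) \<alpha> \<sigma> t)"
proof -
  have "stack p T z = hankel p (T + 1) L \<sigma> *\<^sub>v \<alpha>
      \<longleftrightarrow> (\<forall>i<p * (T + 1). z (i div p) $ (i mod p) = (\<Sum>j<L - T. \<alpha> $ j * \<sigma> (i div p + j) $ (i mod p)))"
    using \<alpha> TL by (simp add: vec_eq_iff stack_def hankel_def scalar_prod_def atLeast0LessThan mult.commute)
  also have "\<dots> \<longleftrightarrow> (\<forall>t<T + 1. \<forall>c<p. z t $ c = (\<Sum>j<L - T. \<alpha> $ j * \<sigma> (t + j) $ c))"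
    by (rule all_less_mult_iff)
  also have "\<dots> \<longleftrightarrow> (\<forall>t\<le>T. z t = window_comb p (L - T) \<alpha> \<sigma> t)"
    using zc by (auto simp: vec_eq_iff less_Suc_eq_le)
  finally show ?thesis .
qed

lemma blockdiag_mult_stack_index:
  assumes H: "H \<in> carrier_mat d q" and q: "q > 0" and i: "i < d * (T + 1)"
    and zc: "\<forall>t\<le>T. z t \<in> carrier_vec q"
  shows "(blockdiag T H *\<^sub>v stack q T z) $ i = (H *\<^sub>v z (i div d)) $ (i mod d)"
proof -
  have d: "d > 0" using i by (cases d) auto
  have t: "i div d < T + 1" using less_mult_imp_div_less[of i "T + 1" d] i by (simp add: mult.commute)
  have Hd: "dim_row H = d" "dim_col H = q" using H by auto
  have "(blockdiag T H *\<^sub>v stack q T z) $ i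
      = (\<Sum>c<(T + 1) * q. (if i div d = c div q then H $$ (i mod d, c mod q) else 0) * z (c div q) $ (c mod q))"
    using i unfolding blockdiag_def stack_def Hd
    by (simp add: scalar_prod_def atLeast0LessThan mult.commute)
  also have "\<dots> = (\<Sum>t<T + 1. if t = i div d then (\<Sum>l<q. H $$ (i mod d, l) * z t $ l) else 0)"
    unfolding sum_lessThan_mult_split by (intro sum.cong refl) (use q in auto)
  also have "\<dots> = (\<Sum>l<q. H $$ (i mod d, l) * z (i div d) $ l)"
    using t by (simp add: sum.delta)
  also have "\<dots> = (H *\<^sub>v z (i div d)) $ (i mod d)"
  proof -
    have "z (i div d) \<in> carrier_vec q" using zc t by simp
    then show ?thesis using H d by (simp add: scalar_prod_def atLeast0LessThan row_def)
  qed
  finally show ?thesis .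
qed

lemma vec_le_blockdiag_iff:
  assumes Hx: "Hx \<in> carrier_mat d n" and Hu: "Hu \<in> carrier_mat d m" and h: "h \<in> carrier_vec d"
    and n: "n > 0" and m: "m > 0"
    and xc: "\<forall>t\<le>T. x t \<in> carrier_vec n" and uc: "\<forall>t\<le>T. u t \<in> carrier_vec m"
  shows "vec_le (blockdiag T Hx *\<^sub>v stack n T x + blockdiag T Hu *\<^sub>v stack m T u)
            (vec (dim_vec h * (T + 1)) (\<lambda>i. h $ (i mod dim_vec h)))
     \<longleftrightarrow> (\<forall>t\<le>T. vec_le (Hx *\<^sub>v x t + Hu *\<^sub>v u t) h)"
proof -
  have "vec_le (blockdiag T Hx *\<^sub>v stack n T x + blockdiag T Hu *\<^sub>v stack m T u)
            (vec (dim_vec h * (T + 1)) (\<lambda>i. h $ (i mod dim_vec h)))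
      \<longleftrightarrow> (\<forall>i<d * (T + 1).
            (Hx *\<^sub>v x (i div d)) $ (i mod d) + (Hu *\<^sub>v u (i div d)) $ (i mod d) \<le> h $ (i mod d))"
    using Hx Hu h blockdiag_mult_stack_index[OF Hx n _ xc] blockdiag_mult_stack_index[OF Hu m _ uc]
    unfolding vec_le_def by (simp add: blockdiag_def)
  also have "\<dots> \<longleftrightarrow> (\<forall>t<T + 1. \<forall>r<d. (Hx *\<^sub>v x t) $ r + (Hu *\<^sub>v u t) $ r \<le> h $ r)"
    by (rule all_less_mult_iff)
  also have "\<dots> \<longleftrightarrow> (\<forall>t\<le>T. vec_le (Hx *\<^sub>v x t + Hu *\<^sub>v u t) h)"
    using Hx Hu h unfolding vec_le_def by (auto simp: less_Suc_eq_le)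
  finally show ?thesis .
qed

lemma Gamma_set_add_rank_one:
  fixes \<delta> w :: "nat \<Rightarrow> real"
  assumes TL: "T < L" and G0: "G0 \<in> Gamma_set n T L xd"
    and \<delta>x: "\<forall>c<n. (\<Sum>j<L - T. xd j $ c * \<delta> j) = 0" and \<delta>1: "(\<Sum>j<L - T. \<delta> j) = 0"
  shows "mat (L - T) n (\<lambda>(j, c). G0 $$ (j, c) + \<delta> j * w c) \<in> Gamma_set n T L xd"
proof -
  let ?G = "mat (L - T) n (\<lambda>(j, c). G0 $$ (j, c) + \<delta> j * w c)"
  have "(\<Sum>j<L - T. xd j $ c * ?G $$ (j, c')) = (\<Sum>j<L - T. xd j $ c * G0 $$ (j, c'))"
    if "c < n" "c' < n" for c c'
  proof -
    have "(\<Sum>j<L - T. xd j $ c * ?G $$ (j, c'))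
        = (\<Sum>j<L - T. xd j $ c * G0 $$ (j, c') + (xd j $ c * \<delta> j) * w c')"
      using that by (intro sum.cong refl) (simp add: algebra_simps)
    also have "\<dots> = (\<Sum>j<L - T. xd j $ c * G0 $$ (j, c')) + (\<Sum>j<L - T. xd j $ c * \<delta> j) * w c'"
      by (simp only: sum.distrib sum_distrib_right)
    also have "\<dots> = (\<Sum>j<L - T. xd j $ c * G0 $$ (j, c'))" using \<delta>x that by simp
    finally show ?thesis .
  qed
  moreover have "(\<Sum>j<L - T. ?G $$ (j, c)) = (\<Sum>j<L - T. G0 $$ (j, c))" if "c < n" for c
    using that \<delta>1 by (simp add: sum.distrib sum_distrib_right[symmetric])
  ultimately show ?thesis using G0 unfolding Gamma_set_iff[OF TL] by simp
qed

text \<open>If \<open>x0 = 0\<close>, \<open>\<alpha>\<close> itself lies in \<open>\<Lambda>\<close>. Otherwise keep \<open>g0\<close> and correct \<open>G0\<close>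
  by the rank-one term \<open>\<delta> x0\<^sup>T / |x0|\<^sup>2\<close>, where \<open>\<delta>\<close> is the difference between \<open>\<alpha>\<close> and the
  vector produced by \<open>G0\<close> and \<open>g0\<close>; \<open>\<delta>\<close> is annihilated by \<open>H\<^sub>1\<close> and \<open>1\<^sup>T\<close>, so the result
  stays in \<open>\<Gamma>\<close>.\<close>

lemma exists_Gamma_Lambda_comb:
  assumes TL: "T < L" and G0: "G0 \<in> Gamma_set n T L xd" and g0: "g0 \<in> Lambda_set n T L xd"
    and \<alpha>: "\<alpha> \<in> carrier_vec (L - T)" and \<alpha>1: "(\<Sum>j<L - T. \<alpha> $ j) = 1"
    and \<alpha>x: "window_comb n (L - T) \<alpha> xd 0 = x0" and x0: "x0 \<in> carrier_vec n"
  shows "\<exists>G g. G \<in> Gamma_set n T L xd \<and> g \<in> Lambda_set n T L xd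
     \<and> GG_mat n G g *\<^sub>v (x0 @\<^sub>v ones_vec 1) = \<alpha>"
proof -
  let ?N = "L - T"
  have G0c: "G0 \<in> carrier_mat ?N n" using G0 unfolding Gamma_set_iff[OF TL] by blast
  have first_rows: "(\<Sum>j<?N. xd j $ c * v $ j) = x0 $ c"
    if "window_comb n ?N v xd 0 = x0" "c < n" for v c
    using arg_cong[OF that(1), of "\<lambda>w. w $ c"] that(2) by (simp add: mult.commute)
  show ?thesis
  proof (cases "x0 = 0\<^sub>v n")
    case True
    then have "\<alpha> \<in> Lambda_set n T L xd"
      using \<alpha> \<alpha>1 first_rows[OF \<alpha>x] unfolding Lambda_set_iff[OF TL] by simp
    moreover have "GG_mat n G0 \<alpha> *\<^sub>v (x0 @\<^sub>v ones_vec 1) = \<alpha>"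
      unfolding GG_mat_mult_vec[OF G0c x0] using True \<alpha> by (simp add: vec_eq_iff)
    ultimately show ?thesis using G0 by blast
  next
    case False
    define \<nu> where "\<nu> = (\<Sum>c<n. x0 $ c * x0 $ c)"
    have "\<nu> = x0 \<bullet> x0" unfolding \<nu>_def scalar_prod_def using x0 by (simp add: atLeast0LessThan)
    then have \<nu>0: "\<nu> \<noteq> 0" using False scalar_prod_self_eq_0_iff[OF x0] by simp
    define \<alpha>0 where "\<alpha>0 = GG_mat n G0 g0 *\<^sub>v (x0 @\<^sub>v ones_vec 1)"
    define \<delta> where "\<delta> j = \<alpha> $ j - \<alpha>0 $ j" for j
    define G where "G = mat ?N n (\<lambda>(j, c). G0 $$ (j, c) + \<delta> j * (x0 $ c / \<nu>))"
    have "\<forall>c<n. (\<Sum>j<?N. xd j $ c * \<delta> j) = 0"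
      using first_rows[OF \<alpha>x] first_rows[OF GG_mat_comb_first_rows[OF TL G0 g0 x0]]
      unfolding \<delta>_def \<alpha>0_def by (simp add: right_diff_distrib sum_subtractf)
    moreover have "(\<Sum>j<?N. \<delta> j) = 0"
      using \<alpha>1 GG_mat_comb_sum[OF TL G0 g0 x0] unfolding \<delta>_def \<alpha>0_def by (simp add: sum_subtractf)
    ultimately have "G \<in> Gamma_set n T L xd"
      unfolding G_def by (rule Gamma_set_add_rank_one[OF TL G0])
    moreover have "GG_mat n G g0 *\<^sub>v (x0 @\<^sub>v ones_vec 1) = \<alpha>"
    proof -
      have Gc: "G \<in> carrier_mat ?N n" unfolding G_def by simp
      have "(\<Sum>c<n. (G $$ (j, c) - g0 $ j) * x0 $ c) + g0 $ j = \<alpha> $ j" if j: "j < ?N" for j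
      proof -
        have "(\<Sum>c<n. (G $$ (j, c) - g0 $ j) * x0 $ c)
            = (\<Sum>c<n. (G0 $$ (j, c) - g0 $ j) * x0 $ c + \<delta> j / \<nu> * (x0 $ c * x0 $ c))"
          unfolding G_def using j by (intro sum.cong refl) (auto simp: algebra_simps)
        also have "\<dots> = (\<Sum>c<n. (G0 $$ (j, c) - g0 $ j) * x0 $ c) + \<delta> j / \<nu> * \<nu>"
          unfolding \<nu>_def by (simp add: sum.distrib sum_distrib_left)
        finally show ?thesis
          using \<nu>0 j unfolding \<delta>_def \<alpha>0_def GG_mat_mult_vec[OF G0c x0] by simp
      qed
      then show ?thesis unfolding GG_mat_mult_vec[OF Gc x0] using \<alpha> by (intro eq_vecI) auto
    qed
    ultimately show ?thesis using g0 by blast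
  qed
qed

context affine_data
begin

lemma Gamma_set_nonempty:
  assumes m: "m > 0" and ctrb: "controllable n m A B"
    and PE: "persistently_exciting m (n + (T + 1) + 1) L ud"
  shows "\<exists>G. G \<in> Gamma_set n T L xd"
proof -
  have TL: "T < L" using persistently_exciting_length[OF m PE] by simp
  then have N: "L - (T + 1) + 1 = L - T" by simp
  have "\<forall>c. \<exists>\<beta>. c < n \<longrightarrow> \<beta> \<in> carrier_vec (L - T) \<and> (\<Sum>j<L - T. \<beta> $ j) = 1
      \<and> window_comb n (L - T) \<beta> xd 0 = unit_vec n c"
    using fundamental_lemma[OF m _ ctrb PE unit_vec_carrier, of "\<lambda>_. 0\<^sub>v m"] unfolding N by auto
  then obtain \<beta> where \<beta>: "\<And>c. c < n \<Longrightarrow> \<beta> c \<in> carrier_vec (L - T) \<and> (\<Sum>j<L - T. \<beta> c $ j) = 1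
      \<and> window_comb n (L - T) (\<beta> c) xd 0 = unit_vec n c"
    by metis
  have "mat (L - T) n (\<lambda>(j, c). \<beta> c $ j) \<in> Gamma_set n T L xd"
    unfolding Gamma_set_iff[OF TL]
  proof (intro conjI allI impI)
    fix c c' assume c: "c < n" and c': "c' < n"
    have "(\<Sum>j<L - T. xd j $ c * mat (L - T) n (\<lambda>(j, c). \<beta> c $ j) $$ (j, c'))
        = window_comb n (L - T) (\<beta> c') xd 0 $ c"
      using c c' by (simp add: mult.commute)
    then show "(\<Sum>j<L - T. xd j $ c * mat (L - T) n (\<lambda>(j, c). \<beta> c $ j) $$ (j, c'))
        = (if c = c' then 1 else 0)"
      using \<beta>[OF c'] c c' by simp
  qed (use \<beta> in auto)
  then show ?thesis by blast
qed

lemma Lambda_set_nonempty: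
  assumes m: "m > 0" and ctrb: "controllable n m A B"
    and PE: "persistently_exciting m (n + (T + 1) + 1) L ud"
  shows "\<exists>g. g \<in> Lambda_set n T L xd"
proof -
  have TL: "T < L" using persistently_exciting_length[OF m PE] by simp
  then have N: "L - (T + 1) + 1 = L - T" by simp
  obtain g where "g \<in> carrier_vec (L - T)" "(\<Sum>j<L - T. g $ j) = 1" "window_comb n (L - T) g xd 0 = 0\<^sub>v n"
    using fundamental_lemma[OF m _ ctrb PE zero_carrier_vec, of "\<lambda>_. 0\<^sub>v m"] unfolding N by auto
  then have "g \<in> Lambda_set n T L xd"
    unfolding Lambda_set_iff[OF TL] by (auto simp: vec_eq_iff mult.commute)
  then show ?thesis by blast
qed

lemma feasible_P3_imp_feasible_MPC:
  assumes n: "n > 0" and m: "m > 0" and TL: "T < L"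
    and Hx: "Hx \<in> carrier_mat d n" and Hu: "Hu \<in> carrier_mat d m" and h: "h \<in> carrier_vec d"
    and F: "feasible_P3 n m T L xd ud Hx Hu h xinit XT x u"
  shows "feasible_MPC n m T A B s Hx Hu h xinit XT x u"
proof -
  obtain G g where xc: "\<forall>t\<le>T. x t \<in> carrier_vec n" and uc: "\<forall>t\<le>T. u t \<in> carrier_vec m"
    and G: "G \<in> Gamma_set n T L xd" and g: "g \<in> Lambda_set n T L xd"
    and sx: "stack n T x = hankel n (T + 1) L xd *\<^sub>v (GG_mat n G g *\<^sub>v (x 0 @\<^sub>v ones_vec 1))"
    and su: "stack m T u = hankel m (T + 1) L ud *\<^sub>v (GG_mat n G g *\<^sub>v (x 0 @\<^sub>v ones_vec 1))"
    and ineq: "vec_le (blockdiag T Hx *\<^sub>v stack n T x + blockdiag T Hu *\<^sub>v stack m T u)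
                 (vec (dim_vec h * (T + 1)) (\<lambda>i. h $ (i mod dim_vec h)))"
    and x0: "x 0 = xinit" and xT: "x T \<in> XT"
    using F unfolding feasible_P3_def by blast
  define \<alpha> where "\<alpha> = GG_mat n G g *\<^sub>v (x 0 @\<^sub>v ones_vec 1)"
  have Gc: "G \<in> carrier_mat (L - T) n" using G unfolding Gamma_set_iff[OF TL] by blast
  have x0c: "x 0 \<in> carrier_vec n" using xc by blast
  have \<alpha>: "\<alpha> \<in> carrier_vec (L - T)" unfolding \<alpha>_def GG_mat_mult_vec[OF Gc x0c] by simp
  have \<alpha>1: "(\<Sum>j<L - T. \<alpha> $ j) = 1"
    unfolding \<alpha>_def by (rule GG_mat_comb_sum[OF TL G g x0c])
  have xs: "\<forall>t\<le>T. x t = window_comb n (L - T) \<alpha> xd t"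
    using stack_eq_hankel_iff[OF \<alpha> TL xc] sx unfolding \<alpha>_def by blast
  have us: "\<forall>t\<le>T. u t = window_comb m (L - T) \<alpha> ud t"
    using stack_eq_hankel_iff[OF \<alpha> TL uc] su unfolding \<alpha>_def by blast
  have "\<forall>t<T. x (Suc t) = A *\<^sub>v x t + B *\<^sub>v u t + s"
    using window_comb_step[OF \<alpha>1] xs us TL by simp
  then show ?thesis
    unfolding feasible_MPC_def using xc uc ineq x0 xT vec_le_blockdiag_iff[OF Hx Hu h n m xc uc] by simp
qed

lemma feasible_MPC_imp_feasible_P3:
  assumes n: "n > 0" and m: "m > 0" and ctrb: "controllable n m A B"
    and PE: "persistently_exciting m (n + (T + 1) + 1) L ud"
    and Hx: "Hx \<in> carrier_mat d n" and Hu: "Hu \<in> carrier_mat d m" and h: "h \<in> carrier_vec d"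
    and F: "feasible_MPC n m T A B s Hx Hu h xinit XT x u"
  shows "feasible_P3 n m T L xd ud Hx Hu h xinit XT x u"
proof -
  have xc: "\<forall>t\<le>T. x t \<in> carrier_vec n" and uc: "\<forall>t\<le>T. u t \<in> carrier_vec m"
    and dyn: "\<forall>t<T. x (Suc t) = A *\<^sub>v x t + B *\<^sub>v u t + s"
    and ineq: "\<forall>t\<le>T. vec_le (Hx *\<^sub>v x t + Hu *\<^sub>v u t) h"
    and x0: "x 0 = xinit" and xT: "x T \<in> XT"
    using F unfolding feasible_MPC_def by blast+
  have TL: "T < L" using persistently_exciting_length[OF m PE] by simp
  then have N: "L - (T + 1) + 1 = L - T" by simp
  obtain \<alpha> where \<alpha>: "\<alpha> \<in> carrier_vec (L - T)" and \<alpha>1: "(\<Sum>j<L - T. \<alpha> $ j) = 1"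
    and \<alpha>x: "window_comb n (L - T) \<alpha> xd 0 = x 0"
    and \<alpha>u: "\<forall>t<T + 1. window_comb m (L - T) \<alpha> ud t = u t"
    using fundamental_lemma[OF m _ ctrb PE, of "x 0" u] xc uc unfolding N by auto
  have xs: "\<forall>t\<le>T. x t = window_comb n (L - T) \<alpha> xd t"
    using trajectory_eq_window_comb[OF \<alpha>1, of T x u] \<alpha>x \<alpha>u dyn TL by auto
  obtain G0 g0 where "G0 \<in> Gamma_set n T L xd" "g0 \<in> Lambda_set n T L xd"
    using Gamma_set_nonempty[OF m ctrb PE] Lambda_set_nonempty[OF m ctrb PE] by blast
  then obtain G g where G: "G \<in> Gamma_set n T L xd" and g: "g \<in> Lambda_set n T L xd"
    and GG: "GG_mat n G g *\<^sub>v (x 0 @\<^sub>v ones_vec 1) = \<alpha>"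
    using exists_Gamma_Lambda_comb[OF TL _ _ \<alpha> \<alpha>1 \<alpha>x] xc by blast
  have "stack n T x = hankel n (T + 1) L xd *\<^sub>v \<alpha>" "stack m T u = hankel m (T + 1) L ud *\<^sub>v \<alpha>"
    using stack_eq_hankel_iff[OF \<alpha> TL xc] stack_eq_hankel_iff[OF \<alpha> TL uc] xs \<alpha>u by auto
  then show ?thesis
    unfolding feasible_P3_def using xc uc G g GG ineq x0 xT vec_le_blockdiag_iff[OF Hx Hu h n m xc uc]
    by auto
qed

end

theorem mainTheorem4:
  fixes n m d T L :: nat
    and A B :: "real mat" and s :: "real vec"
    and xd ud :: "nat \<Rightarrow> real vec"
    and p :: pkind and P Q R :: "real mat"
    and Hx Hu :: "real mat" and h :: "real vec"
    and C :: "real mat" and c :: "real vec" and XT :: "real vec set"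
    and xinit :: "real vec"
    and xs us :: "nat \<Rightarrow> real vec"
  assumes "n > 0" and "m > 0"
    and "A \<in> carrier_mat n n" and "B \<in> carrier_mat n m" and "s \<in> carrier_vec n"
    and "controllable n m A B"
    and "\<forall>t<L. xd t \<in> carrier_vec n \<and> ud t \<in> carrier_vec m"
    and "\<forall>t. t + 1 < L \<longrightarrow> xd (t + 1) = A *\<^sub>v xd t + B *\<^sub>v ud t + s"
    and "persistently_exciting m (n + (T + 1) + 1) L ud"
    and "cost_ok p n m P Q R"
    and "Hx \<in> carrier_mat d n" and "Hu \<in> carrier_mat d m" and "h \<in> carrier_vec d"
    and "C \<in> carrier_mat (dim_row C) n" and "c \<in> carrier_vec (dim_row C)"
    and "XT = {z \<in> carrier_vec n. vec_le (C *\<^sub>v z) c}"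
    and "xinit \<in> carrier_vec n"
  shows "is_optimal (feasible_P3 n m T L xd ud Hx Hu h xinit XT) (cost p P Q R T) xs us
     \<longleftrightarrow> is_optimal (feasible_MPC n m T A B s Hx Hu h xinit XT) (cost p P Q R T) xs us"
proof -
  interpret affine_data n m A B s xd ud L
    using assms(3-5,7,8) by unfold_locales
  have TL: "T < L" using persistently_exciting_length[OF assms(2,9)] by simp
  have "feasible_P3 n m T L xd ud Hx Hu h xinit XT x u
      \<longleftrightarrow> feasible_MPC n m T A B s Hx Hu h xinit XT x u" for x u
    using feasible_P3_imp_feasible_MPC[OF assms(1,2) TL assms(11-13)]
      feasible_MPC_imp_feasible_P3[OF assms(1,2,6,9,11-13)] by blast
  then show ?thesis unfolding is_optimal_def by simp
qed

end
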